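(* Suppose that for all integers $n\ge3$, $d\ge0$ and $j$ with $2\le j\le n-1$ one has \[ b_{n,d}(1,j)+b_{n,d}(j,1)=2\,p_{n,d}(1,j). \] Then for every $n\ge1$ and every $d$ with $0\le d\le\lfloor (n-1)/2\rfloor$, the number of ballot permutations of $[n]$ with exactly $d$ descents equals the number of odd order permutations of $[n]$ with cyclic weight $d$, i.e. $b_{n,d}=p_{n,d}$.
   Context: For a permutation $\pi=\pi_1\cdots\pi_n$ of $[n]$ (one-line notation), an ascent is a position $t$ with $\pi_t<\pi_{t+1}$ and a descent one with $\pi_t>\pi_{t+1}$; the height of a word is its number of ascents minus its number of descents. $\pi$ is a ballot permutation if every prefix $\pi_1\cdots\pi_t$ has nonnegative height. $\mathscr{B}_{n,d}$ is the set of ballot permutations of $[n]$ with exactly $d$ descents, $b_{n,d}=\lvert\mathscr{B}_{n,d}\rvert$, and $b_{n,d}(i,j)$ is the number of $\pi\in\mathscr{B}_{n,d}$ containing $i\,n\,j$ as a factor ($\pi_t=i,\pi_{t+1}=n,\pi_{t+2}=j$ for some $t$). A cycle $(c_1\cdots c_k)$ means $c_1\mapsto c_2\mapsto\cdots\mapsto c_k\mapsto c_1$; $\operatorname{cdes}(c)=\lvert\{t\in[k]:c_t>c_{t+1}\}\rvert$, $\operatorname{casc}(c)=\lvert\{t\in[k]:c_t<c_{t+1}\}\rvert$ with $c_{k+1}=c_1$; the cyclic weight of a cycle is $\min(\operatorname{cdes}(c),\operatorname{casc}(c))$ and that of a permutation is the sum over its cycles. An odd order permutation has all cycles of odd length.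 $\mathscr{P}_{n,d}$ is the set of odd order permutations of $[n]$ with cyclic weight $d$, $p_{n,d}=\lvert\mathscr{P}_{n,d}\rvert$, and $p_{n,d}(i,j)$ is the number of $\pi\in\mathscr{P}_{n,d}$ with $\pi(i)=n$ and $\pi(n)=j$ (i.e. containing $i\,n\,j$ as a cyclic factor). *)

theory Defs
  imports "HOL-Combinatorics.Combinatorics"
begin

(* One-line notation: a permutation of [n] is a list in permutations_of_set {1..n}.
   Positions are 0-based internally. *)

definition asc :: "nat list \<Rightarrow> nat" where
  "asc w = card {t. Suc t < length w \<and> w ! t < w ! Suc t}"

definition des :: "nat list \<Rightarrow> nat" where
  "des w = card {t. Suc t < length w \<and> w ! t > w ! Suc t}"

definition height :: "nat list \<Rightarrow> int" where
  "height w = int (asc w) - int (des w)"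

definition ballot :: "nat list \<Rightarrow> bool" where
  "ballot w \<longleftrightarrow> (\<forall>t \<le> length w. height (take t w) \<ge> 0)"

definition ballot_perms :: "nat \<Rightarrow> nat \<Rightarrow> nat list set" where
  "ballot_perms n d = {w \<in> permutations_of_set {1..n}. ballot w \<and> des w = d}"

definition b :: "nat \<Rightarrow> nat \<Rightarrow> nat" where
  "b n d = card (ballot_perms n d)"

definition b_factor :: "nat \<Rightarrow> nat \<Rightarrow> nat \<Rightarrow> nat \<Rightarrow> nat" where
  "b_factor n d i j = card {w \<in> ballot_perms n d.
      \<exists>t. t + 2 < length w \<and> w ! t = i \<and> w ! (t+1) = n \<and> w ! (t+2) = j}"

definition cycle_of :: "(nat \<Rightarrow> nat) \<Rightarrow> nat \<Rightarrow> nat set" where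
  "cycle_of \<sigma> x = {(\<sigma> ^^ k) x | k. True}"

definition cycles :: "nat \<Rightarrow> (nat \<Rightarrow> nat) \<Rightarrow> nat set set" where
  "cycles n \<sigma> = cycle_of \<sigma> ` {1..n}"

(* cyclic descents / ascents of a cycle C of sigma: positions t with c_t > c_{t+1} = sigma c_t *)
definition cdes :: "(nat \<Rightarrow> nat) \<Rightarrow> nat set \<Rightarrow> nat" where
  "cdes \<sigma> C = card {y \<in> C. y > \<sigma> y}"

definition casc :: "(nat \<Rightarrow> nat) \<Rightarrow> nat set \<Rightarrow> nat" where
  "casc \<sigma> C = card {y \<in> C. y < \<sigma> y}"

definition cyclic_weight :: "nat \<Rightarrow> (nat \<Rightarrow> nat) \<Rightarrow> nat" where
  "cyclic_weight n \<sigma> = (\<Sum>C \<in> cycles n \<sigma>. min (cdes \<sigma> C) (casc \<sigma> C))"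

definition odd_order :: "nat \<Rightarrow> (nat \<Rightarrow> nat) \<Rightarrow> bool" where
  "odd_order n \<sigma> \<longleftrightarrow> (\<forall>C \<in> cycles n \<sigma>. odd (card C))"

definition odd_perms :: "nat \<Rightarrow> nat \<Rightarrow> (nat \<Rightarrow> nat) set" where
  "odd_perms n d = {\<sigma>. \<sigma> permutes {1..n} \<and> odd_order n \<sigma> \<and> cyclic_weight n \<sigma> = d}"

definition p :: "nat \<Rightarrow> nat \<Rightarrow> nat" where
  "p n d = card (odd_perms n d)"

definition p_factor :: "nat \<Rightarrow> nat \<Rightarrow> nat \<Rightarrow> nat \<Rightarrow> nat" where
  "p_factor n d i j = card {\<sigma> \<in> odd_perms n d. \<sigma> i = n \<and> \<sigma> n = j}"

end

(* Deleting n from a permutation gives the recursions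
     b n d = b (n - 1) d + (sum over i ~= j in [n - 1] of b_factor n d i j),
     p n d = p (n - 1) d + (sum over i ~= j in [n - 1] of p_factor n d i j),
   so by induction on n it suffices that the two sums agree.
   Inversion shows that p_factor n d i j is symmetric in i and j, and relabelling the values by the
   cycle 1 -> n - 1 -> n - 2 -> ... -> 2 -> 1 shows that it is unchanged when i and j both decrease
   by one.  For ballot permutations, b_factor n d i j = b_factor n d (i + 1) (j + 1) whenever
   i, j <= n - 2: writing w = u (n - 1) v, the word v' 1 u', where ' raises every value except n by
   one, has the factor (i + 1) n (j + 1) and the same number of descents, and the words on which the
   ballot property of w and of v' 1 u' differ can be matched with each other.  Hence, with
   k = |i - j| + 1, the hypothesis gives
     b_factor n d i j + b_factor n d j i = b_factor n d 1 k + b_factor n d k 1 = 2 * p_factor n d 1 k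
       = p_factor n d i j + p_factor n d j i. *)

theory Submission
  imports Defs "HOL-Library.Sublist"
begin

lemma cycle_of_self: "x \<in> cycle_of \<sigma> x"
  unfolding cycle_of_def by (auto intro: exI[of _ 0])

lemma cycle_of_funpow: "(\<sigma> ^^ k) x \<in> cycle_of \<sigma> x"
  unfolding cycle_of_def by auto

lemma cycle_of_closed: "y \<in> cycle_of \<sigma> x \<Longrightarrow> \<sigma> y \<in> cycle_of \<sigma> x"
  unfolding cycle_of_def by (auto intro: exI[of _ "Suc _"])

lemma cycle_of_subset:
  assumes "\<sigma> permutes S" "x \<in> S"
  shows "cycle_of \<sigma> x \<subseteq> S"
  unfolding cycle_of_def using permutes_in_funpow_image[OF assms] by auto

lemma cycles_subset:
  assumes "\<sigma> permutes {1..n}" "C \<in> cycles n \<sigma>"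
  shows "C \<subseteq> {1..n}"
  using assms cycle_of_subset unfolding cycles_def by blast

lemma permutes_inv_eq_funpow:
  assumes "\<sigma> permutes S" "finite S"
  shows "\<exists>k. inv \<sigma> y = (\<sigma> ^^ k) y"
proof -
  obtain k where k: "k > 0" "(\<sigma> ^^ k) y = y"
    using permutation_self permutes_imp_permutation[OF assms(2,1)] by metis
  then have "\<sigma> ((\<sigma> ^^ (k - 1)) y) = y"
    by (metis Suc_diff_1 comp_apply funpow.simps(2))
  then show ?thesis using permutes_inv_eq[OF assms(1)] by blast
qed

lemma cycle_of_inv_closed:
  assumes "\<sigma> permutes S" "finite S" "y \<in> cycle_of \<sigma> x"
  shows "inv \<sigma> y \<in> cycle_of \<sigma> x"
proof -
  obtain k where "inv \<sigma> y = (\<sigma> ^^ k) y" using permutes_inv_eq_funpow[OF assms(1,2)] by blast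
  moreover obtain l where "y = (\<sigma> ^^ l) x" using assms(3) unfolding cycle_of_def by blast
  ultimately have "inv \<sigma> y = (\<sigma> ^^ (k + l)) x" by (simp add: funpow_add)
  then show ?thesis using cycle_of_funpow by metis
qed

lemma cycle_of_inv:
  assumes "\<sigma> permutes S" "finite S"
  shows "cycle_of (inv \<sigma>) x = cycle_of \<sigma> x"
proof -
  have sub: "cycle_of (inv \<tau>) x \<subseteq> cycle_of \<tau> x" if "\<tau> permutes S" for \<tau>
  proof
    fix y assume "y \<in> cycle_of (inv \<tau>) x"
    then obtain k where "y = (inv \<tau> ^^ k) x" unfolding cycle_of_def by blast
    moreover have "(inv \<tau> ^^ k) x \<in> cycle_of \<tau> x"
      by (induction k) (auto simp: cycle_of_self cycle_of_inv_closed[OF that assms(2)])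
    ultimately show "y \<in> cycle_of \<tau> x" by simp
  qed
  show ?thesis
    using sub[OF assms(1)] sub[OF permutes_inv[OF assms(1)]] permutes_inv_inv[OF assms(1)] by auto
qed

lemma cycles_inv:
  assumes "\<sigma> permutes S" "finite S"
  shows "cycles n (inv \<sigma>) = cycles n \<sigma>"
  unfolding cycles_def using cycle_of_inv[OF assms] by simp

lemma card_cycle_of_inv_pred:
  assumes "\<sigma> permutes S" "finite S" "C = cycle_of \<sigma> x"
  shows "card {y \<in> C. R y (inv \<sigma> y)} = card {z \<in> C. R (\<sigma> z) z}"
proof -
  have "{y \<in> C. R y (inv \<sigma> y)} = \<sigma> ` {z \<in> C. R (\<sigma> z) z}"
  proof (intro equalityI subsetI)
    fix y assume "y \<in> {y \<in> C. R y (inv \<sigma> y)}"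
    then show "y \<in> \<sigma> ` {z \<in> C. R (\<sigma> z) z}"
      using cycle_of_inv_closed[OF assms(1,2)] permutes_inverses[OF assms(1)] assms(3)
      by (intro image_eqI[of y \<sigma> "inv \<sigma> y"]) auto
  qed (use cycle_of_closed permutes_inverses[OF assms(1)] assms(3) in auto)
  then show ?thesis using permutes_inj[OF assms(1)] by (simp add: card_image inj_on_subset)
qed

lemma cdes_inv:
  assumes "\<sigma> permutes S" "finite S" "C = cycle_of \<sigma> x"
  shows "cdes (inv \<sigma>) C = casc \<sigma> C"
  unfolding cdes_def casc_def using card_cycle_of_inv_pred[OF assms, of "(>)"] by simp

lemma casc_inv:
  assumes "\<sigma> permutes S" "finite S" "C = cycle_of \<sigma> x"
  shows "casc (inv \<sigma>) C = cdes \<sigma> C"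
  unfolding cdes_def casc_def using card_cycle_of_inv_pred[OF assms, of "(<)"] by simp

lemma cyclic_weight_inv:
  assumes "\<sigma> permutes S" "finite S"
  shows "cyclic_weight n (inv \<sigma>) = cyclic_weight n \<sigma>"
proof -
  have "min (cdes (inv \<sigma>) C) (casc (inv \<sigma>) C) = min (cdes \<sigma> C) (casc \<sigma> C)"
    if "C \<in> cycles n \<sigma>" for C
    using that cdes_inv[OF assms] casc_inv[OF assms] unfolding cycles_def by (auto simp: min.commute)
  then show ?thesis unfolding cyclic_weight_def cycles_inv[OF assms] by (rule sum.cong[OF refl])
qed

lemma odd_order_inv:
  assumes "\<sigma> permutes S" "finite S"
  shows "odd_order n (inv \<sigma>) = odd_order n \<sigma>"
  unfolding odd_order_def cycles_inv[OF assms] ..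

lemma odd_perms_permutes: "\<sigma> \<in> odd_perms n d \<Longrightarrow> \<sigma> permutes {1..n}"
  unfolding odd_perms_def by blast

lemma inv_odd_perms:
  assumes "\<sigma> \<in> odd_perms n d"
  shows "inv \<sigma> \<in> odd_perms n d"
proof -
  have P: "\<sigma> permutes {1..n}" using odd_perms_permutes[OF assms] .
  show ?thesis using assms permutes_inv[OF P] unfolding odd_perms_def
    by (simp add: odd_order_inv[OF P] cyclic_weight_inv[OF P])
qed

lemma p_factor_swap: "p_factor n d i j = p_factor n d j i"
proof -
  have "bij_betw inv {\<sigma> \<in> odd_perms n d. \<sigma> i = n \<and> \<sigma> n = j} {\<sigma> \<in> odd_perms n d. \<sigma> j = n \<and> \<sigma> n = i}"
    by (rule bij_betw_byWitness[where f' = inv])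
      (auto simp: inv_odd_perms permutes_inv_inv permutes_inv_eq dest: odd_perms_permutes)
  then show ?thesis unfolding p_factor_def by (rule bij_betw_same_card)
qed

section \<open>Conjugation and the shift of \<open>p_factor\<close>\<close>

lemma funpow_conj:
  assumes "r permutes S"
  shows "((r \<circ> \<sigma> \<circ> inv r) ^^ k) (r x) = r ((\<sigma> ^^ k) x)"
  by (induction k) (simp_all add: permutes_inverses(2)[OF assms])

lemma cycle_of_conj:
  assumes "r permutes S"
  shows "cycle_of (r \<circ> \<sigma> \<circ> inv r) (r x) = r ` cycle_of \<sigma> x"
  unfolding cycle_of_def using funpow_conj[OF assms] by auto

lemma cycles_conj:
  assumes "r permutes {1..n}"
  shows "cycles n (r \<circ> \<sigma> \<circ> inv r) = (\<lambda>C. r ` C) ` cycles n \<sigma>"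
proof -
  have "cycles n (r \<circ> \<sigma> \<circ> inv r) = (\<lambda>x. cycle_of (r \<circ> \<sigma> \<circ> inv r) (r x)) ` {1..n}"
    unfolding cycles_def by (subst permutes_image[OF assms, symmetric]) (simp add: image_image)
  then show ?thesis unfolding cycles_def cycle_of_conj[OF assms] by (simp add: image_image)
qed

lemma cdes_conj:
  assumes "r permutes S"
  shows "cdes (r \<circ> \<sigma> \<circ> inv r) (r ` C) = card {x \<in> C. r (\<sigma> x) < r x}"
proof -
  have "{y \<in> r ` C. y > (r \<circ> \<sigma> \<circ> inv r) y} = r ` {x \<in> C. r (\<sigma> x) < r x}"
    using permutes_inverses(2)[OF assms] by auto
  then show ?thesis
    unfolding cdes_def using permutes_inj[OF assms] by (simp add: card_image inj_on_subset)
qed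

lemma casc_conj:
  assumes "r permutes S"
  shows "casc (r \<circ> \<sigma> \<circ> inv r) (r ` C) = card {x \<in> C. r x < r (\<sigma> x)}"
proof -
  have "{y \<in> r ` C. y < (r \<circ> \<sigma> \<circ> inv r) y} = r ` {x \<in> C. r x < r (\<sigma> x)}"
    using permutes_inverses(2)[OF assms] by auto
  then show ?thesis
    unfolding casc_def using permutes_inj[OF assms] by (simp add: card_image inj_on_subset)
qed

lemma odd_order_conj:
  assumes "r permutes {1..n}"
  shows "odd_order n (r \<circ> \<sigma> \<circ> inv r) = odd_order n \<sigma>"
  unfolding odd_order_def cycles_conj[OF assms]
  using permutes_inj[OF assms] by (simp add: card_image inj_on_subset)

lemma cyclic_weight_conj:
  assumes r: "r permutes {1..n}"
    and des: "\<And>C. C \<in> cycles n \<sigma> \<Longrightarrow> card {x \<in> C. r (\<sigma> x) < r x} = cdes \<sigma> C"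
    and asc: "\<And>C. C \<in> cycles n \<sigma> \<Longrightarrow> card {x \<in> C. r x < r (\<sigma> x)} = casc \<sigma> C"
  shows "cyclic_weight n (r \<circ> \<sigma> \<circ> inv r) = cyclic_weight n \<sigma>"
proof -
  have "inj_on (\<lambda>C. r ` C) X" for X
    using permutes_inj[OF r] by (simp add: inj_on_def inj_image_eq_iff)
  then have "cyclic_weight n (r \<circ> \<sigma> \<circ> inv r)
      = (\<Sum>C \<in> cycles n \<sigma>. min (cdes (r \<circ> \<sigma> \<circ> inv r) (r ` C)) (casc (r \<circ> \<sigma> \<circ> inv r) (r ` C)))"
    unfolding cyclic_weight_def cycles_conj[OF r] by (simp add: sum.reindex)
  also have "\<dots> = cyclic_weight n \<sigma>"
    unfolding cyclic_weight_def cdes_conj[OF r] casc_conj[OF r] using des asc by (intro sum.cong) auto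
  finally show ?thesis .
qed

lemma card_ascents_add_descents:
  fixes r :: "'a \<Rightarrow> 'b::linorder"
  assumes "finite C" "inj r"
  shows "card {x \<in> C. r x < r (\<sigma> x)} + card {x \<in> C. r (\<sigma> x) < r x} = card {x \<in> C. \<sigma> x \<noteq> x}"
proof -
  have "r x < r (\<sigma> x) \<or> r (\<sigma> x) < r x \<longleftrightarrow> \<sigma> x \<noteq> x" for x
    using inj_eq[OF assms(2), of x "\<sigma> x"] by (cases "\<sigma> x = x") (auto simp: neq_iff[symmetric])
  then have "{x \<in> C. \<sigma> x \<noteq> x} = {x \<in> C. r x < r (\<sigma> x)} \<union> {x \<in> C. r (\<sigma> x) < r x}"
    by blast
  moreover have "{x \<in> C. r x < r (\<sigma> x)} \<inter> {x \<in> C. r (\<sigma> x) < r x} = {}" by auto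
  ultimately show ?thesis using assms(1) by (simp add: card_Un_disjoint)
qed

definition rot_down :: "nat \<Rightarrow> nat \<Rightarrow> nat" where
  "rot_down m x = (if x = 1 then m else if 2 \<le> x \<and> x \<le> m then x - 1 else x)"

lemma rot_down_permutes:
  assumes "1 \<le> m" "m \<le> n"
  shows "rot_down m permutes {1..n}"
proof (rule bij_imp_permutes)
  have "inj_on (rot_down m) {1..n}" "rot_down m ` {1..n} \<subseteq> {1..n}"
    using assms unfolding inj_on_def rot_down_def by auto
  then show "bij_betw (rot_down m) {1..n} {1..n}"
    by (simp add: bij_betw_def endo_inj_surj)
  show "x \<notin> {1..n} \<Longrightarrow> rot_down m x = x" for x
    using assms unfolding rot_down_def by auto
qed

lemma rot_down_less_iff:
  assumes "2 \<le> x" "x \<le> n" "2 \<le> y" "y \<le> n"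
  shows "rot_down (n - 1) x < rot_down (n - 1) y \<longleftrightarrow> x < y"
  using assms unfolding rot_down_def by auto

lemma cycles_step_less_iff_rot_down:
  assumes P: "\<sigma> permutes {1..n}" and C: "C \<in> cycles n \<sigma>" and x: "x \<in> C" "x \<noteq> 1" "\<sigma> x \<noteq> 1"
  shows "rot_down (n - 1) (\<sigma> x) < rot_down (n - 1) x \<longleftrightarrow> \<sigma> x < x"
proof -
  have "\<sigma> x \<in> C" using C x(1) cycle_of_closed unfolding cycles_def by blast
  then have "2 \<le> \<sigma> x" "\<sigma> x \<le> n" "2 \<le> x" "x \<le> n" using x cycles_subset[OF P C] by fastforce+
  then show ?thesis by (rule rot_down_less_iff)
qed

text \<open>If \<open>1\<close> lies on a nontrivial cycle, then moving it to the top value \<open>n - 1\<close> turns the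
  descent into \<open>1\<close> into an ascent and the ascent out of \<open>1\<close> into a descent; this needs
  that neither neighbour of \<open>1\<close> is \<open>n\<close>.\<close>

lemma descents_rot_down_moved_one:
  assumes n: "3 \<le> n" and P: "\<sigma> permutes {1..n}" and "\<sigma> 1 \<noteq> n" "\<sigma> n \<noteq> 1"
    and C: "C \<in> cycles n \<sigma>" and moved: "1 \<in> C" "\<sigma> 1 \<noteq> 1"
  shows "{x \<in> C. rot_down (n - 1) (\<sigma> x) < rot_down (n - 1) x}
    = insert 1 ({x \<in> C. \<sigma> x < x} - {inv \<sigma> 1})"
proof -
  let ?r = "rot_down (n - 1)" and ?a = "inv \<sigma> 1"
  have aC: "?a \<in> C" using cycle_of_inv_closed[OF P _] moved C unfolding cycles_def by blast
  have sa: "\<sigma> ?a = 1" using permutes_inverses(1)[OF P] by simp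
  have "?a \<noteq> 1" "?a \<noteq> n" using sa moved(2) \<open>\<sigma> n \<noteq> 1\<close> by auto
  then have a: "2 \<le> ?a" "?a \<le> n - 1" using aC cycles_subset[OF P C] by fastforce+
  have b: "2 \<le> \<sigma> 1" "\<sigma> 1 \<le> n - 1"
    using moved permutes_in_image[OF P, of 1] \<open>\<sigma> 1 \<noteq> n\<close> n by auto
  have rot: "?r 1 = n - 1" "?r ?a = ?a - 1" "?r (\<sigma> 1) = \<sigma> 1 - 1"
    using a b unfolding rot_down_def by auto
  have "x \<in> C \<and> ?r (\<sigma> x) < ?r x \<longleftrightarrow> x \<in> insert 1 ({x \<in> C. \<sigma> x < x} - {?a})" for x
  proof (cases "x = 1 \<or> x = ?a")
    case True
    have "?r (\<sigma> 1) < ?r 1" unfolding rot using b n by arith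
    moreover have "\<not> ?r (\<sigma> ?a) < ?r ?a" unfolding sa rot using a by arith
    ultimately show ?thesis using True moved(1) aC sa a by auto
  next
    case False
    then have "\<sigma> x \<noteq> 1" using sa inj_eq[OF permutes_inj[OF P], of x ?a] by auto
    then show ?thesis using False cycles_step_less_iff_rot_down[OF P C, of x] by auto
  qed
  then show ?thesis by blast
qed

lemma card_descents_rot_down:
  assumes n: "3 \<le> n" and P: "\<sigma> permutes {1..n}" and "\<sigma> 1 \<noteq> n" "\<sigma> n \<noteq> 1"
    and C: "C \<in> cycles n \<sigma>"
  shows "card {x \<in> C. rot_down (n - 1) (\<sigma> x) < rot_down (n - 1) x} = cdes \<sigma> C"
proof -
  let ?r = "rot_down (n - 1)"
  have clo: "\<sigma> y \<in> C" if "y \<in> C" for y using C cycle_of_closed that unfolding cycles_def by blast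
  have inj: "\<sigma> x = \<sigma> y \<longleftrightarrow> x = y" for x y using inj_eq[OF permutes_inj[OF P]] .
  consider (fixed) "1 \<notin> C \<or> \<sigma> 1 = 1" | (moved) "1 \<in> C" "\<sigma> 1 \<noteq> 1" by blast
  then have "card {x \<in> C. ?r (\<sigma> x) < ?r x} = card {x \<in> C. \<sigma> x < x}"
  proof cases
    case fixed
    have "\<sigma> x \<noteq> 1" if "x \<in> C" "x \<noteq> 1" for x
      using fixed that clo[OF that(1)] inj[of x 1] by auto
    then have "?r (\<sigma> x) < ?r x \<longleftrightarrow> \<sigma> x < x" if "x \<in> C" for x
      using cycles_step_less_iff_rot_down[OF P C that] fixed that by (cases "x = 1") auto
    then have "{x \<in> C. ?r (\<sigma> x) < ?r x} = {x \<in> C. \<sigma> x < x}" by blast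
    then show ?thesis by simp
  next
    case moved
    let ?D = "{x \<in> C. \<sigma> x < x}" and ?a = "inv \<sigma> 1"
    have fin: "finite ?D" by (rule finite_subset[of _ "{1..n}"]) (use cycles_subset[OF P C] in auto)
    have "\<sigma> ?a = 1" using permutes_inverses(1)[OF P] by simp
    moreover have "?a \<in> C" using cycle_of_inv_closed[OF P _] moved C unfolding cycles_def by blast
    moreover have "?a \<noteq> 1" using \<open>\<sigma> ?a = 1\<close> moved(2) by auto
    ultimately have "?a \<in> ?D" using cycles_subset[OF P C] by fastforce
    moreover have "1 \<notin> ?D" using clo[OF moved(1)] cycles_subset[OF P C] by fastforce
    ultimately have "card (insert 1 (?D - {?a})) = card ?D" using card_Suc_Diff1[OF fin] fin by simp
    then show ?thesis using descents_rot_down_moved_one[OF assms moved] by simp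
  qed
  then show ?thesis unfolding cdes_def by (simp add: conj_commute)
qed

lemma card_ascents_rot_down:
  assumes n: "3 \<le> n" and P: "\<sigma> permutes {1..n}" and "\<sigma> 1 \<noteq> n" "\<sigma> n \<noteq> 1"
    and C: "C \<in> cycles n \<sigma>"
  shows "card {x \<in> C. rot_down (n - 1) x < rot_down (n - 1) (\<sigma> x)} = casc \<sigma> C"
proof -
  have fin: "finite C" using cycles_subset[OF P C] finite_subset by blast
  have "inj (rot_down (n - 1))" using permutes_inj[OF rot_down_permutes[of "n - 1" n]] n by simp
  from card_ascents_add_descents[OF fin this, of \<sigma>] card_ascents_add_descents[OF fin inj_on_id, of \<sigma>]
  show ?thesis using card_descents_rot_down[OF assms] unfolding casc_def cdes_def by simp
qed

lemma rot_down_conj_odd_perms_iff: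
  assumes n: "3 \<le> n" and P: "\<sigma> permutes {1..n}" and "\<sigma> 1 \<noteq> n" "\<sigma> n \<noteq> 1"
  shows "rot_down (n - 1) \<circ> \<sigma> \<circ> inv (rot_down (n - 1)) \<in> odd_perms n d \<longleftrightarrow> \<sigma> \<in> odd_perms n d"
proof -
  have r: "rot_down (n - 1) permutes {1..n}" using n by (intro rot_down_permutes) auto
  have "rot_down (n - 1) \<circ> \<sigma> \<circ> inv (rot_down (n - 1)) permutes {1..n}"
    using permutes_compose[OF permutes_inv[OF r] permutes_compose[OF P r]] by (simp add: comp_assoc)
  then show ?thesis
    using P odd_order_conj[OF r] cyclic_weight_conj[OF r]
      card_descents_rot_down[OF assms] card_ascents_rot_down[OF assms]
    unfolding odd_perms_def by simp
qed

lemma p_factor_shift: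
  assumes n: "3 \<le> n" and ij: "2 \<le> i" "i \<le> n - 1" "2 \<le> j" "j \<le> n - 1"
  shows "p_factor n d i j = p_factor n d (i - 1) (j - 1)"
proof -
  define r where "r = rot_down (n - 1)"
  let ?A = "{\<sigma> \<in> odd_perms n d. \<sigma> i = n \<and> \<sigma> n = j}"
  let ?B = "{\<sigma> \<in> odd_perms n d. \<sigma> (i - 1) = n \<and> \<sigma> n = j - 1}"
  have r: "r permutes {1..n}" unfolding r_def using n by (intro rot_down_permutes) auto
  have rv: "r n = n" "r i = i - 1" "r j = j - 1" using n ij unfolding r_def rot_down_def by auto
  then have rv': "inv r n = n" "inv r (i - 1) = i" "inv r (j - 1) = j"
    using permutes_inverses(2)[OF r, of n] permutes_inverses(2)[OF r, of i]
      permutes_inverses(2)[OF r, of j]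
    unfolding rv by simp_all
  have conj_iff: "r \<circ> \<sigma> \<circ> inv r \<in> ?B \<longleftrightarrow> \<sigma> \<in> ?A"
    if P: "\<sigma> permutes {1..n}" and \<sigma>: "\<sigma> i = n" "\<sigma> n = j" for \<sigma>
  proof -
    have "\<sigma> 1 \<noteq> \<sigma> i" using ij inj_eq[OF permutes_inj[OF P]] by simp
    then have "\<sigma> 1 \<noteq> n" using \<sigma>(1) by simp
    then show ?thesis
      using rot_down_conj_odd_perms_iff[OF n P, folded r_def] \<sigma> ij rv rv' by auto
  qed
  have "bij_betw (\<lambda>\<sigma>. r \<circ> \<sigma> \<circ> inv r) ?A ?B"
  proof (rule bij_betw_byWitness[where f' = "\<lambda>\<tau>. inv r \<circ> \<tau> \<circ> r"])
    show "\<forall>\<sigma> \<in> ?A. inv r \<circ> (r \<circ> \<sigma> \<circ> inv r) \<circ> r = \<sigma>"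
      "\<forall>\<tau> \<in> ?B. r \<circ> (inv r \<circ> \<tau> \<circ> r) \<circ> inv r = \<tau>"
      by (auto simp: fun_eq_iff permutes_inverses[OF r])
    show "(\<lambda>\<sigma>. r \<circ> \<sigma> \<circ> inv r) ` ?A \<subseteq> ?B"
      using conj_iff odd_perms_permutes by blast
    show "(\<lambda>\<tau>. inv r \<circ> \<tau> \<circ> r) ` ?B \<subseteq> ?A"
    proof (rule image_subsetI)
      fix \<tau> assume "\<tau> \<in> ?B"
      then have \<tau>: "\<tau> \<in> odd_perms n d" "\<tau> (i - 1) = n" "\<tau> n = j - 1" by auto
      let ?\<sigma> = "inv r \<circ> \<tau> \<circ> r"
      have P: "?\<sigma> permutes {1..n}"
        using permutes_compose[OF r permutes_compose[OF odd_perms_permutes[OF \<tau>(1)] permutes_inv[OF r]]]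
        by (simp add: comp_assoc)
      have \<sigma>: "?\<sigma> i = n" "?\<sigma> n = j" using \<tau> rv rv' by simp_all
      have "r \<circ> ?\<sigma> \<circ> inv r = \<tau>" by (auto simp: fun_eq_iff permutes_inverses[OF r])
      with \<open>\<tau> \<in> ?B\<close> have "r \<circ> ?\<sigma> \<circ> inv r \<in> ?B" by (simp only:)
      with conj_iff[OF P \<sigma>] show "?\<sigma> \<in> ?A" by (rule iffD1)
    qed
  qed
  then show ?thesis unfolding p_factor_def by (rule bij_betw_same_card)
qed

section \<open>Deleting \<open>n\<close> from an odd order permutation\<close>

lemma card_Un_UN_disjoint:
  assumes "finite S" "S = A \<union> (\<Union>x\<in>I. F x)" "finite I"
    "\<And>x. x \<in> I \<Longrightarrow> A \<inter> F x = {}"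
    "\<And>x y. x \<in> I \<Longrightarrow> y \<in> I \<Longrightarrow> x \<noteq> y \<Longrightarrow> F x \<inter> F y = {}"
  shows "card S = card A + (\<Sum>x\<in>I. card (F x))"
proof -
  have "finite A" "\<And>x. x \<in> I \<Longrightarrow> finite (F x)"
    using assms(1,2) by (auto intro: finite_subset)
  moreover have "A \<inter> (\<Union>x\<in>I. F x) = {}" using assms(4) by blast
  ultimately show ?thesis using assms(2,3,5) by (simp add: card_Un_disjoint card_UN_disjoint)
qed

definition distinct_pairs :: "nat \<Rightarrow> (nat \<times> nat) set" where
  "distinct_pairs m = {(i, j). i \<in> {1..m} \<and> j \<in> {1..m} \<and> i \<noteq> j}"

lemma finite_distinct_pairs: "finite (distinct_pairs m)"
  by (rule finite_subset[of _ "{1..m} \<times> {1..m}"]) (auto simp: distinct_pairs_def)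

lemma sum_distinct_pairs_swap:
  "(\<Sum>(i, j) \<in> distinct_pairs m. f j i) = (\<Sum>(i, j) \<in> distinct_pairs m. f i j)"
proof -
  have "prod.swap ` distinct_pairs m = distinct_pairs m" by (auto simp: distinct_pairs_def)
  then show ?thesis
    using sum.reindex[of prod.swap "distinct_pairs m" "\<lambda>(i, j). f i j"] by (simp add: case_prod_beta)
qed

lemma cycle_of_fixpoint: "\<sigma> x = x \<Longrightarrow> cycle_of \<sigma> x = {x}"
proof -
  assume "\<sigma> x = x"
  then have "(\<sigma> ^^ k) x = x" for k by (induction k) auto
  then show ?thesis unfolding cycle_of_def by auto
qed

lemma odd_perms_fixing_max:
  assumes "2 \<le> n"
  shows "{\<sigma> \<in> odd_perms n d. \<sigma> n = n} = odd_perms (n - 1) d"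
proof -
  have "\<sigma> permutes {1..n-1} \<longleftrightarrow> \<sigma> permutes {1..n} \<and> \<sigma> n = n" for \<sigma>
  proof
    assume P: "\<sigma> permutes {1..n-1}"
    have "n \<notin> {1..n-1}" "{1..n-1} \<subseteq> {1..n}" by auto
    then show "\<sigma> permutes {1..n} \<and> \<sigma> n = n" using permutes_subset[OF P] permutes_not_in[OF P] by blast
  next
    assume P: "\<sigma> permutes {1..n} \<and> \<sigma> n = n"
    have "x \<in> {1..n} - {1..n-1} \<Longrightarrow> x = n" for x by auto
    then show "\<sigma> permutes {1..n-1}" using P permutes_superset[of \<sigma> "{1..n}"] by blast
  qed
  moreover have "odd_order (n-1) \<sigma> = odd_order n \<sigma> \<and> cyclic_weight (n-1) \<sigma> = cyclic_weight n \<sigma>"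
    if "\<sigma> n = n" for \<sigma>
  proof -
    have "{1..n} = insert n {1..n-1}" using assms by auto
    then have cyc: "cycles n \<sigma> = insert {n} (cycles (n-1) \<sigma>)"
      unfolding cycles_def by (simp only: image_insert cycle_of_fixpoint[of \<sigma> n, OF that])
    have "{n} \<notin> cycles (n-1) \<sigma>"
    proof
      assume "{n} \<in> cycles (n-1) \<sigma>"
      then obtain x where "x \<in> {1..n-1}" "cycle_of \<sigma> x = {n}" unfolding cycles_def by auto
      then show False using cycle_of_self[of x \<sigma>] by auto
    qed
    moreover have "cdes \<sigma> {n} = 0" using that unfolding cdes_def by simp
    moreover have "finite (cycles (n-1) \<sigma>)" unfolding cycles_def by simp
    ultimately show ?thesis unfolding odd_order_def cyclic_weight_def cyc by simp
  qed
  ultimately show ?thesis unfolding odd_perms_def by auto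
qed

lemma finite_odd_perms: "finite (odd_perms n d)"
  by (rule finite_subset[of _ "{\<sigma>. \<sigma> permutes {1..n}}"])
    (auto simp: odd_perms_def finite_permutations)

lemma not_odd_order_if_2_cycle:
  assumes "\<sigma> permutes {1..n}" "1 \<le> n" "\<sigma> j = n" "\<sigma> n = j" "j \<noteq> n"
  shows "\<not> odd_order n \<sigma>"
proof -
  have "(\<sigma> ^^ k) n \<in> {n, j}" for k by (induction k) (use assms in auto)
  then have "cycle_of \<sigma> n \<subseteq> {n, j}" unfolding cycle_of_def by auto
  moreover have "n \<in> cycle_of \<sigma> n" "j \<in> cycle_of \<sigma> n"
    using cycle_of_self cycle_of_closed[OF cycle_of_self] assms(4) by metis+
  ultimately have "cycle_of \<sigma> n = {n, j}" by auto
  moreover have "cycle_of \<sigma> n \<in> cycles n \<sigma>" unfolding cycles_def using assms(2) by auto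
  ultimately show ?thesis unfolding odd_order_def using assms(5) by force
qed

lemma p_recursion:
  assumes n: "2 \<le> n"
  shows "p n d = p (n - 1) d + (\<Sum>(i, j) \<in> distinct_pairs (n - 1). p_factor n d i j)"
proof -
  define F where "F x = {\<sigma> \<in> odd_perms n d. \<sigma> (fst x) = n \<and> \<sigma> n = snd x}" for x
  let ?A = "{\<sigma> \<in> odd_perms n d. \<sigma> n = n}"
  have "odd_perms n d \<subseteq> ?A \<union> (\<Union>x\<in>distinct_pairs (n - 1). F x)"
  proof
    fix \<sigma> assume \<sigma>: "\<sigma> \<in> odd_perms n d"
    then have P: "\<sigma> permutes {1..n}" by (rule odd_perms_permutes)
    show "\<sigma> \<in> ?A \<union> (\<Union>x\<in>distinct_pairs (n - 1). F x)"
    proof (cases "\<sigma> n = n")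
      case False
      define i where "i = inv \<sigma> n"
      have "\<sigma> i = n" unfolding i_def using permutes_inverses(1)[OF P] by simp
      moreover have "i \<in> {1..n}" "\<sigma> n \<in> {1..n}"
        unfolding i_def using permutes_in_image[OF permutes_inv[OF P]] permutes_in_image[OF P] n by auto
      moreover have "i \<noteq> n" using \<open>\<sigma> i = n\<close> False by auto
      moreover have "i \<noteq> \<sigma> n"
        using not_odd_order_if_2_cycle[OF P _ _ _ False] \<sigma> n \<open>\<sigma> i = n\<close>
        unfolding odd_perms_def by auto
      ultimately have "(i, \<sigma> n) \<in> distinct_pairs (n - 1)" "\<sigma> \<in> F (i, \<sigma> n)"
        using False \<sigma> unfolding distinct_pairs_def F_def by auto
      then show ?thesis by blast
    qed (use \<sigma> in blast)
  qed
  then have "odd_perms n d = ?A \<union> (\<Union>x\<in>distinct_pairs (n - 1). F x)"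
    unfolding F_def by blast
  moreover have "F x \<inter> F y = {}" if "x \<noteq> y" for x y
  proof (rule ccontr)
    assume "F x \<inter> F y \<noteq> {}"
    then obtain \<sigma> where "\<sigma> \<in> F x" "\<sigma> \<in> F y" by blast
    then have "\<sigma> \<in> odd_perms n d" "\<sigma> (fst x) = \<sigma> (fst y)" "snd x = snd y"
      unfolding F_def by auto
    then show False
      using that inj_eq[OF permutes_inj[OF odd_perms_permutes]] by (simp add: prod_eq_iff)
  qed
  moreover have "?A \<inter> F x = {}" if "x \<in> distinct_pairs (n - 1)" for x
    using that unfolding F_def distinct_pairs_def by auto
  ultimately have "p n d = card ?A + (\<Sum>x\<in>distinct_pairs (n - 1). card (F x))"
    unfolding p_def by (intro card_Un_UN_disjoint[OF finite_odd_perms _ finite_distinct_pairs]) auto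
  then show ?thesis
    unfolding p_def p_factor_def F_def odd_perms_fixing_max[OF n] by (simp add: case_prod_beta)
qed

section \<open>Heights of words\<close>

definition slope :: "nat \<Rightarrow> nat \<Rightarrow> int" where
  "slope x y = (if x < y then 1 else if y < x then -1 else 0)"

lemma slope_bounds: "-1 \<le> slope x y" "slope x y \<le> 1"
  unfolding slope_def by auto

lemma slope_up: "x < y \<Longrightarrow> slope x y = 1"
  unfolding slope_def by auto

lemma slope_down: "y < x \<Longrightarrow> slope x y = -1"
  unfolding slope_def by auto

lemma slope_eq_1D: "slope x y = 1 \<Longrightarrow> x < y"
  unfolding slope_def by (auto split: if_splits)

lemma slope_eq_minus_1D: "slope x y = -1 \<Longrightarrow> y < x"
  unfolding slope_def by (auto split: if_splits)

lemma card_adjacent_pairs_Cons_Cons: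
  "card {t. Suc t < length (x # y # zs) \<and> R ((x # y # zs) ! t) ((x # y # zs) ! Suc t)}
     = (if R x y then 1 else 0) + card {t. Suc t < length (y # zs) \<and> R ((y # zs) ! t) ((y # zs) ! Suc t)}"
proof -
  let ?A = "{t. Suc t < length (y # zs) \<and> R ((y # zs) ! t) ((y # zs) ! Suc t)}"
  have "finite ?A" by (rule finite_subset[of _ "{..<length (y # zs)}"]) auto
  moreover have "{t. Suc t < length (x # y # zs) \<and> R ((x # y # zs) ! t) ((x # y # zs) ! Suc t)}
      = (if R x y then {0} else {}) \<union> Suc ` ?A" (is "?L = ?R")
  proof (rule set_eqI)
    show "t \<in> ?L \<longleftrightarrow> t \<in> ?R" for t by (cases t) auto
  qed
  ultimately show ?thesis by (auto simp: card_image)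
qed

lemma asc_simps [simp]:
  "asc [] = 0" "asc [x] = 0" "asc (x # y # zs) = (if x < y then 1 else 0) + asc (y # zs)"
  unfolding asc_def using card_adjacent_pairs_Cons_Cons[of x y zs "(<)"] by simp_all

lemma des_simps [simp]:
  "des [] = 0" "des [x] = 0" "des (x # y # zs) = (if y < x then 1 else 0) + des (y # zs)"
  unfolding des_def using card_adjacent_pairs_Cons_Cons[of x y zs "\<lambda>a b. b < a"] by simp_all

lemma height_simps [simp]:
  "height [] = 0" "height [x] = 0" "height (x # y # zs) = slope x y + height (y # zs)"
  unfolding height_def slope_def by simp_all

lemma height_append:
  "xs \<noteq> [] \<Longrightarrow> ys \<noteq> [] \<Longrightarrow> height (xs @ ys) = height xs + slope (last xs) (hd ys) + height ys"
  by (induction xs rule: induct_list012) (auto simp: neq_Nil_conv)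

lemma height_snoc: "u \<noteq> [] \<Longrightarrow> height (u @ [x]) = height u + slope (last u) x"
  using height_append[of u "[x]"] by simp

lemma des_append:
  "xs \<noteq> [] \<Longrightarrow> ys \<noteq> [] \<Longrightarrow> des (xs @ ys) = des xs + (if hd ys < last xs then 1 else 0) + des ys"
  by (induction xs rule: induct_list012) (auto simp: neq_Nil_conv)

lemma des_peak:
  assumes "u \<noteq> [] \<Longrightarrow> last u < q" "v \<noteq> [] \<Longrightarrow> hd v < q"
  shows "des (u @ q # v) = des u + des v + (if v = [] then 0 else 1)"
  using assms des_append[of u "q # v"] des_append[of "[q]" v] by (cases "u = []"; cases "v = []") auto

lemma des_valley:
  assumes "v \<noteq> [] \<Longrightarrow> q < last v" "u \<noteq> [] \<Longrightarrow> q < hd u"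
  shows "des (v @ q # u) = des v + des u + (if v = [] then 0 else 1)"
  using assms des_append[of v "q # u"] des_append[of "[q]" u] by (cases "u = []"; cases "v = []") auto

lemma height_take_le_1: "k \<le> 1 \<Longrightarrow> height (take k w) = 0"
  by (cases w) (auto simp: le_Suc_eq)

lemma height_des_map:
  assumes "\<And>a c. a \<in> set w \<Longrightarrow> c \<in> set w \<Longrightarrow> f a < f c \<longleftrightarrow> a < c"
  shows "height (map f w) = height w" "des (map f w) = des w"
  using assms by (induction w rule: induct_list012) (auto simp: slope_def)

definition heights_ge :: "int \<Rightarrow> nat list \<Rightarrow> bool" where
  "heights_ge c w \<longleftrightarrow> (\<forall>k \<le> length w. c \<le> height (take k w))"

lemma ballot_iff_heights_ge: "ballot w \<longleftrightarrow> heights_ge 0 w"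
  by (simp add: ballot_def heights_ge_def)

lemma heights_ge_nonpos: "heights_ge c w \<Longrightarrow> c \<le> 0"
proof -
  assume "heights_ge c w"
  then have "c \<le> height (take 0 w)" unfolding heights_ge_def by blast
  then show ?thesis by simp
qed

lemma heights_ge_single [simp]: "heights_ge c [x] \<longleftrightarrow> c \<le> 0"
  unfolding heights_ge_def using height_take_le_1 by (simp add: exI[of _ 0])

lemma heights_ge_height: "heights_ge c w \<Longrightarrow> c \<le> height w"
proof -
  assume "heights_ge c w"
  then have "c \<le> height (take (length w) w)" unfolding heights_ge_def by blast
  then show ?thesis by simp
qed

lemma heights_ge_take: "heights_ge c w \<Longrightarrow> heights_ge c (take k w)"
  unfolding heights_ge_def by (simp add: min_def)

lemma heights_ge_mono: "heights_ge c w \<Longrightarrow> c' \<le> c \<Longrightarrow> heights_ge c' w"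
  unfolding heights_ge_def by (meson order_trans)

lemma heights_ge_append:
  assumes "xs \<noteq> []" "ys \<noteq> []"
  shows "heights_ge c (xs @ ys) \<longleftrightarrow> heights_ge c xs \<and> heights_ge (c - height xs - slope (last xs) (hd ys)) ys"
proof
  assume H: "heights_ge c (xs @ ys)"
  have A: "heights_ge c xs" using heights_ge_take[OF H, of "length xs"] by simp
  have "c - height xs - slope (last xs) (hd ys) \<le> height (take k ys)" if "k \<le> length ys" for k
  proof (cases "k = 0")
    case True
    have "Suc (length xs) \<le> length (xs @ ys)" using assms(2) by (cases ys) auto
    then have "c \<le> height (take (Suc (length xs)) (xs @ ys))" using H unfolding heights_ge_def by blast
    also have "take (Suc (length xs)) (xs @ ys) = xs @ [hd ys]" using assms
      by (cases ys) auto
    finally show ?thesis using True assms by (simp add: height_append)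
  next
    case False
    have "length xs + k \<le> length (xs @ ys)" using that by simp
    then have "c \<le> height (take (length xs + k) (xs @ ys))" using H unfolding heights_ge_def by blast
    also have "take (length xs + k) (xs @ ys) = xs @ take k ys" by simp
    finally show ?thesis using False assms that
      by (subst (asm) height_append) (auto simp: hd_take)
  qed
  then show "heights_ge c xs \<and> heights_ge (c - height xs - slope (last xs) (hd ys)) ys"
    using A unfolding heights_ge_def by blast
next
  assume H: "heights_ge c xs \<and> heights_ge (c - height xs - slope (last xs) (hd ys)) ys"
  show "heights_ge c (xs @ ys)" unfolding heights_ge_def
  proof (intro allI impI)
    fix k assume k: "k \<le> length (xs @ ys)"
    show "c \<le> height (take k (xs @ ys))"
    proof (cases "k \<le> length xs")
      case True then show ?thesis using H unfolding heights_ge_def by simp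
    next
      case False
      define l where "l = k - length xs"
      have l: "k = length xs + l" "l > 0" "l \<le> length ys" using k False unfolding l_def by auto
      have "take k (xs @ ys) = xs @ take l ys" using l by simp
      moreover have "c - height xs - slope (last xs) (hd ys) \<le> height (take l ys)"
        using H l unfolding heights_ge_def by simp
      ultimately show ?thesis using l assms by (simp add: height_append hd_take)
    qed
  qed
qed

lemma not_heights_ge_0_descent: "y < x \<Longrightarrow> \<not> heights_ge 0 (x # y # zs)"
proof
  assume "y < x" "heights_ge 0 (x # y # zs)"
  then have "0 \<le> height (take 2 (x # y # zs))" unfolding heights_ge_def by force
  then show False using \<open>y < x\<close> by (simp add: slope_def)
qed

lemma heights_ge_map:
  assumes "\<And>a c. a \<in> set w \<Longrightarrow> c \<in> set w \<Longrightarrow> (f a < f c \<longleftrightarrow> a < c)"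
  shows "heights_ge k (map f w) = heights_ge k w"
proof -
  have "height (take l (map f w)) = height (take l w)" for l
  proof -
    have "\<And>a c. a \<in> set (take l w) \<Longrightarrow> c \<in> set (take l w) \<Longrightarrow> (f a < f c \<longleftrightarrow> a < c)"
      using assms in_set_takeD by metis
    then show ?thesis using height_des_map(1)[of "take l w" f] by (simp add: take_map)
  qed
  then show ?thesis unfolding heights_ge_def by simp
qed

lemma heights_ge_peak:
  assumes "u \<noteq> []" "v \<noteq> []" "last u < q" "hd v < q"
  shows "heights_ge 0 (u @ q # v) \<longleftrightarrow> heights_ge 0 u \<and> heights_ge (- height u) v"
proof -
  have "heights_ge 0 (u @ [q] @ v) \<longleftrightarrow> heights_ge 0 u \<and> heights_ge (0 - height u - slope (last u) q) ([q] @ v)"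
    using heights_ge_append[OF assms(1)] by simp
  also have "heights_ge (0 - height u - slope (last u) q) ([q] @ v) \<longleftrightarrow>
      (0 - height u - 1 \<le> 0) \<and> heights_ge (0 - height u - 1 - 0 - slope q (hd v)) v"
    using heights_ge_append[of "[q]" v] assms slope_up[OF assms(3)] by simp
  finally have "heights_ge 0 (u @ q # v) \<longleftrightarrow> heights_ge 0 u \<and> (- height u - 1 \<le> 0) \<and> heights_ge (- height u) v"
    using slope_down[OF assms(4)] by simp
  moreover have "heights_ge 0 u \<Longrightarrow> 0 \<le> height u" using heights_ge_height by fastforce
  ultimately show ?thesis by auto
qed

lemma heights_ge_peak_last:
  assumes "u \<noteq> []" "last u < q"
  shows "heights_ge 0 (u @ [q]) \<longleftrightarrow> heights_ge 0 u"
proof -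
  have "heights_ge 0 (u @ [q]) \<longleftrightarrow> heights_ge 0 u \<and> (0 - height u - slope (last u) q \<le> 0)"
    using heights_ge_append[OF assms(1), of "[q]"] by simp
  moreover have "heights_ge 0 u \<Longrightarrow> 0 \<le> height u" using heights_ge_height by fastforce
  ultimately show ?thesis using slope_up[OF assms(2)] by auto
qed

lemma not_heights_ge_peak_first:
  assumes "v \<noteq> []" "hd v < q"
  shows "\<not> heights_ge 0 (q # v)"
  using assms not_heights_ge_0_descent by (cases v) auto

lemma heights_ge_valley:
  assumes "u \<noteq> []" "v \<noteq> []" "q < last v" "q < hd u"
  shows "heights_ge 0 (v @ q # u) \<longleftrightarrow> heights_ge 0 v \<and> 1 \<le> height v \<and> heights_ge (- height v) u"
proof -
  have "heights_ge 0 (v @ [q] @ u) \<longleftrightarrow> heights_ge 0 v \<and> heights_ge (0 - height v - slope (last v) q) ([q] @ u)"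
    using heights_ge_append[OF assms(2)] by simp
  also have "heights_ge (0 - height v - slope (last v) q) ([q] @ u) \<longleftrightarrow>
      (0 - height v + 1 \<le> 0) \<and> heights_ge (0 - height v + 1 - 0 - slope q (hd u)) u"
    using heights_ge_append[of "[q]" u] assms slope_down[OF assms(3)] by simp
  finally show ?thesis using slope_up[OF assms(4)] by auto
qed

lemma heights_ge_valley_first:
  assumes "u \<noteq> []" "q < hd u"
  shows "heights_ge 0 (q # u) \<longleftrightarrow> heights_ge (-1) u"
  using heights_ge_append[of "[q]" u] assms slope_up[OF assms(2)] by simp

lemma heights_ge_valley_last:
  assumes "v \<noteq> []" "q < last v"
  shows "heights_ge 0 (v @ [q]) \<longleftrightarrow> heights_ge 0 v \<and> 1 \<le> height v"
  using heights_ge_append[OF assms(1), of "[q]"] slope_down[OF assms(2)] by auto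

lemma split_at_first_negative:
  assumes g1: "heights_ge (-1) c" and g0: "\<not> heights_ge 0 c"
  shows "\<exists>u v. c = u @ v \<and> u \<noteq> [] \<and> v \<noteq> [] \<and> heights_ge 0 u \<and> height u = 0
    \<and> slope (last u) (hd v) = -1 \<and> heights_ge 0 v"
proof -
  define K where "K = {k. k \<le> length c \<and> height (take k c) < 0}"
  have "K \<noteq> {}" using g0 unfolding K_def heights_ge_def by force
  define k where "k = Least (\<lambda>k. k \<in> K)"
  have kK: "k \<in> K" unfolding k_def using \<open>K \<noteq> {}\<close> by (metis LeastI ex_in_conv)
  have kmin: "\<And>l. l < k \<Longrightarrow> l \<notin> K" unfolding k_def using not_less_Least by blast
  have kl: "k \<le> length c" and hk: "height (take k c) < 0" using kK unfolding K_def by auto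
  have k2: "2 \<le> k"
  proof (rule ccontr)
    assume "\<not> 2 \<le> k"
    then have "k \<le> 1" by simp
    then show False using height_take_le_1[of k c] hk by simp
  qed
  define u where "u = take (k - 1) c"
  define v where "v = drop (k - 1) c"
  have c: "c = u @ v" unfolding u_def v_def by simp
  have lu: "length u = k - 1" unfolding u_def using kl by simp
  have une: "u \<noteq> []" using lu k2 by auto
  have vne: "v \<noteq> []" unfolding v_def using kl k2 by simp
  have hdv: "hd v = c ! (k - 1)" unfolding v_def using kl k2 by (simp add: hd_drop_conv_nth)
  have tk: "take k c = u @ [hd v]" unfolding u_def hdv using take_Suc_conv_app_nth[of "k - 1" c] kl k2
    by simp
  have gu: "heights_ge 0 u" unfolding heights_ge_def
  proof (intro allI impI)
    fix l assume "l \<le> length u"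
    then have "l < k" "l \<le> length c" using lu kl k2 by auto
    then have "l \<notin> K" using kmin by blast
    moreover have "take l u = take l c" unfolding u_def using \<open>l \<le> length u\<close> lu by (simp add: min_def)
    ultimately show "0 \<le> height (take l u)" using \<open>l \<le> length c\<close> unfolding K_def by auto
  qed
  have hu0: "0 \<le> height u" using heights_ge_height[OF gu] .
  have "-1 \<le> height (take k c)" using g1 kl unfolding heights_ge_def by blast
  then have e: "height u + slope (last u) (hd v) = -1" using hk tk height_snoc[OF une] by simp
  then have s: "slope (last u) (hd v) = -1" and h: "height u = 0" using hu0 slope_bounds[of "last u" "hd v"] by auto
  have "heights_ge (-1 - height u - slope (last u) (hd v)) v" using g1 c heights_ge_append[OF une vne] by simp
  then have gv: "heights_ge 0 v" using s h by simp
  show ?thesis using c une vne gu h s gv by blast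
qed

lemma split_at_first_negative_unique:
  assumes "u1 @ v1 = u2 @ v2"
    "u1 \<noteq> []" "heights_ge 0 u1" "height u1 = 0" "slope (last u1) (hd v1) = -1"
    "u2 \<noteq> []" "heights_ge 0 u2" "height u2 = 0" "slope (last u2) (hd v2) = -1"
  shows "u1 = u2"
proof -
  have no_longer: False
    if "u' = u @ us" "us \<noteq> []" "v = us @ v'" "u \<noteq> []" "height u = 0" "slope (last u) (hd v) = -1"
      "heights_ge 0 u'" for u u' us v v'
  proof -
    have "heights_ge (0 - height u - slope (last u) (hd us)) us"
      using that heights_ge_append[of u us 0] by simp
    then have "heights_ge 1 us" using that by simp
    then show False using heights_ge_nonpos by fastforce
  qed
  have "u1 = u2 \<or> (\<exists>us. us \<noteq> [] \<and> u2 = u1 @ us \<and> v1 = us @ v2)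
      \<or> (\<exists>us. us \<noteq> [] \<and> u1 = u2 @ us \<and> v2 = us @ v1)"
    using assms(1) by (auto simp: append_eq_append_conv2)
  then show ?thesis using no_longer[of u2 u1 _ v1 v2] no_longer[of u1 u2 _ v2 v1] assms by blast
qed

lemma height_take_append:
  assumes "xs \<noteq> []" "ys \<noteq> []" "0 < l"
  shows "height (take (length xs + l) (xs @ ys)) = height xs + slope (last xs) (hd ys) + height (take l ys)"
proof -
  have "take l ys \<noteq> []" "hd (take l ys) = hd ys" using assms(2,3) by (auto simp: hd_take)
  then show ?thesis using height_append[OF assms(1)] by simp
qed

lemma heights_ge_0_if_never_minus_1:
  assumes "heights_ge (-1) v" "\<And>l. 0 < l \<Longrightarrow> l \<le> length v \<Longrightarrow> height (take l v) \<noteq> -1"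
  shows "heights_ge 0 v"
  unfolding heights_ge_def
proof (intro allI impI)
  fix l assume l: "l \<le> length v"
  show "0 \<le> height (take l v)"
  proof (cases "l = 0")
    case False
    have "-1 \<le> height (take l v)" using assms(1) l unfolding heights_ge_def by blast
    moreover have "height (take l v) \<noteq> -1" using assms(2)[OF _ l] False by simp
    ultimately show ?thesis by linarith
  qed simp
qed

lemma split_at_last_zero:
  assumes g0: "heights_ge 0 c" and h1: "1 \<le> height c"
  shows "\<exists>u v. c = u @ v \<and> u \<noteq> [] \<and> v \<noteq> [] \<and> heights_ge 0 u \<and> height u = 0
    \<and> slope (last u) (hd v) = 1 \<and> heights_ge 0 v"
proof -
  define K where "K = {k. 1 \<le> k \<and> k \<le> length c \<and> height (take k c) = 0}"
  have "1 \<le> length c" using h1 by (cases c) auto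
  then have "1 \<in> K" unfolding K_def using height_take_le_1[of 1 c] by auto
  moreover have fin: "finite K" unfolding K_def by auto
  ultimately have k: "Max K \<in> K" using Max_in by blast
  have kmax: "l \<in> K \<Longrightarrow> l \<le> Max K" for l using fin by simp
  have K_iff: "k \<in> K \<longleftrightarrow> 1 \<le> k \<and> k \<le> length c \<and> height (take k c) = 0" for k
    unfolding K_def by simp
  have kK: "1 \<le> Max K" "Max K \<le> length c" "height (take (Max K) c) = 0" using k K_iff by auto
  define u where "u = take (Max K) c"
  define v where "v = drop (Max K) c"
  have c: "c = u @ v" unfolding u_def v_def by simp
  have lu: "length u = Max K" unfolding u_def using kK by simp
  have hu: "height u = 0" unfolding u_def using kK by simp
  have gu: "heights_ge 0 u" unfolding u_def by (rule heights_ge_take[OF g0])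
  have une: "u \<noteq> []" using lu kK by auto
  have vne: "v \<noteq> []"
  proof
    assume "v = []"
    then show False using c hu h1 by simp
  qed
  have step: "height (take (Max K + l) c) = slope (last u) (hd v) + height (take l v)"
    if "0 < l" for l
    using height_take_append[OF une vne that] c lu hu by simp
  have nonzero: "height (take (Max K + l) c) \<noteq> 0" if "0 < l" "l \<le> length v" for l
  proof
    assume "height (take (Max K + l) c) = 0"
    then have "Max K + l \<in> K" unfolding K_iff using that c lu by simp
    then show False using kmax that by fastforce
  qed
  have "1 \<le> length v" using vne by (cases v) auto
  then have "Max K + 1 \<le> length c" using c lu by simp
  then have "0 \<le> height (take (Max K + 1) c)" using g0 unfolding heights_ge_def by blast
  moreover have "height (take 1 v) = 0" by (rule height_take_le_1) simp
  ultimately have s: "slope (last u) (hd v) = 1"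
    using step[of 1] nonzero[of 1] \<open>1 \<le> length v\<close> slope_bounds[of "last u" "hd v"] by simp
  have "heights_ge (-1) v" using g0 heights_ge_append[OF une vne] c hu s by simp
  moreover have "height (take l v) \<noteq> -1" if "0 < l" "l \<le> length v" for l
    using step[OF that(1)] nonzero[OF that] s by simp
  ultimately have "heights_ge 0 v" by (rule heights_ge_0_if_never_minus_1)
  then show ?thesis using c une vne gu hu s by blast
qed

lemma split_at_last_zero_unique:
  assumes "u1 @ v1 = u2 @ v2"
    "u1 \<noteq> []" "height u1 = 0" "slope (last u1) (hd v1) = 1" "heights_ge 0 v1"
    "u2 \<noteq> []" "height u2 = 0" "slope (last u2) (hd v2) = 1" "heights_ge 0 v2"
  shows "u1 = u2"
proof -
  have no_longer: False
    if "u' = u @ us" "us \<noteq> []" "v = us @ v'" "u \<noteq> []" "height u = 0" "slope (last u) (hd v) = 1"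
      "height u' = 0" "heights_ge 0 v" for u u' us v v'
  proof -
    have "height us = -1" using that height_append[of u us] by simp
    moreover have "heights_ge 0 us" using heights_ge_take[OF that(8), of "length us"] that(3) by simp
    ultimately show False using heights_ge_height by fastforce
  qed
  have "u1 = u2 \<or> (\<exists>us. us \<noteq> [] \<and> u2 = u1 @ us \<and> v1 = us @ v2)
      \<or> (\<exists>us. us \<noteq> [] \<and> u1 = u2 @ us \<and> v2 = us @ v1)"
    using assms(1) by (auto simp: append_eq_append_conv2)
  then show ?thesis using no_longer[of u2 u1 _ v1 v2] no_longer[of u1 u2 _ v2 v1] assms by blast
qed

lemma split_at_unique:
  assumes "u @ x # v = u' @ x # v'" "x \<notin> set u" "x \<notin> set u'"
  shows "u = u'" "v = v'"
proof -
  have t: "takeWhile (\<lambda>y. y \<noteq> x) (u @ x # v) = u" using assms(2) by (subst takeWhile_append2) auto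
  have t': "takeWhile (\<lambda>y. y \<noteq> x) (u' @ x # v') = u'" using assms(3) by (subst takeWhile_append2) auto
  show "u = u'" using t t' assms(1) by simp
  then show "v = v'" using assms(1) by simp
qed

lemma factor_iff_sublist:
  "(\<exists>t. t + 2 < length w \<and> w ! t = a \<and> w ! (t+1) = y \<and> w ! (t+2) = c) \<longleftrightarrow> sublist [a, y, c] w"
proof
  assume "\<exists>t. t + 2 < length w \<and> w ! t = a \<and> w ! (t+1) = y \<and> w ! (t+2) = c"
  then obtain t where t: "t + 2 < length w" "w ! t = a" "w ! (t+1) = y" "w ! (t+2) = c" by blast
  have l: "t < length w" "Suc t < length w" "Suc (Suc t) < length w" using t(1) by auto
  have "drop t w = w ! t # drop (Suc t) w" using l(1) by (simp add: Cons_nth_drop_Suc)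
  also have "drop (Suc t) w = w ! Suc t # drop (Suc (Suc t)) w" using l(2) by (simp add: Cons_nth_drop_Suc)
  also have "drop (Suc (Suc t)) w = w ! Suc (Suc t) # drop (Suc (Suc (Suc t))) w" using l(3) by (simp add: Cons_nth_drop_Suc)
  finally have dr: "drop t w = [a, y, c] @ drop (Suc (Suc (Suc t))) w" using t(2,3,4) by simp
  have "w = take t w @ drop t w" by simp
  then have "w = take t w @ [a, y, c] @ drop (Suc (Suc (Suc t))) w" using dr by simp
  then show "sublist [a, y, c] w" unfolding sublist_def by blast
next
  assume "sublist [a, y, c] w"
  then obtain ps ss where w: "w = ps @ [a, y, c] @ ss" unfolding sublist_def by blast
  show "\<exists>t. t + 2 < length w \<and> w ! t = a \<and> w ! (t+1) = y \<and> w ! (t+2) = c"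
    by (rule exI[of _ "length ps"]) (simp add: w nth_append)
qed

lemma sublist3_append_cases:
  assumes "sublist [x, y, z] (u @ v)"
  shows "sublist [x, y, z] u \<or> sublist [x, y, z] v \<or> (\<exists>u0 v0. u = u0 @ [x] \<and> v = y # z # v0)
       \<or> (\<exists>u0 v0. u = u0 @ [x, y] \<and> v = z # v0)"
proof -
  have H: "sublist [x, y, z] u \<or> sublist [x, y, z] v \<or>
        (\<exists>xs1 xs2. [x, y, z] = xs1 @ xs2 \<and> suffix xs1 u \<and> prefix xs2 v)"
    using sublist_append[THEN iffD1, OF assms] .
  moreover have "sublist [x, y, z] u \<or> sublist [x, y, z] v \<or> (\<exists>u0 v0. u = u0 @ [x] \<and> v = y # z # v0)
       \<or> (\<exists>u0 v0. u = u0 @ [x, y] \<and> v = z # v0)"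
    if hh: "[x, y, z] = xs1 @ xs2" "suffix xs1 u" "prefix xs2 v" for xs1 xs2
  proof -
    obtain u0 where u0: "u = u0 @ xs1" using hh(2) unfolding suffix_def by blast
    obtain v0 where v0: "v = xs2 @ v0" using hh(3) unfolding prefix_def by blast
    have e: "xs1 = take (length xs1) [x, y, z]" "xs2 = drop (length xs1) [x, y, z]"
      using hh(1)[symmetric] append_eq_conv_conj by metis+
    have L: "length xs1 \<le> 3" using arg_cong[OF hh(1), of length] by simp
    then have "length xs1 = 0 \<or> length xs1 = 1 \<or> length xs1 = 2 \<or> length xs1 = 3" by linarith
    then show ?thesis
    proof (elim disjE)
      assume "length xs1 = 0"
      then have "v = [] @ [x, y, z] @ v0" using e v0 by simp
      then show ?thesis unfolding sublist_def by blast
    next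
      assume "length xs1 = 1"
      then have "u = u0 @ [x]" "v = y # z # v0" using e u0 v0 by (simp_all add: numeral_eq_Suc)
      then show ?thesis by blast
    next
      assume "length xs1 = 2"
      then have "u = u0 @ [x, y]" "v = z # v0" using e u0 v0 by (simp_all add: numeral_eq_Suc)
      then show ?thesis by blast
    next
      assume "length xs1 = 3"
      then have "u = u0 @ [x, y, z] @ []" using e u0 by (simp add: numeral_eq_Suc)
      then show ?thesis unfolding sublist_def by blast
    qed
  qed
  ultimately show ?thesis by blast
qed

lemma sublist_peak_at_descent:
  assumes "sublist [x, y, z] (u @ v)" "u \<noteq> []" "v \<noteq> []" "heights_ge 0 u" "height u = 0" "hd v < last u"
    "x < y" "z < y"
  shows "sublist [x, y, z] u \<or> sublist [x, y, z] v"
proof -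
  have no1: False if "u = u0 @ [x]" "v = y # z # v0" for u0 v0 using that assms(6,7) by simp
  have no2: False if "u = u0 @ [x, y]" "v = z # v0" for u0 v0
  proof -
    have "u = (u0 @ [x]) @ [y]" using that by simp
    then have "height u = height (u0 @ [x]) + slope x y" using height_snoc[of "u0 @ [x]" y] by simp
    moreover have "0 \<le> height (u0 @ [x])"
    proof -
      have "heights_ge 0 (take (length u0 + 1) u)" using heights_ge_take[OF assms(4)] .
      moreover have "take (length u0 + 1) u = u0 @ [x]" using that by simp
      ultimately show ?thesis using heights_ge_height by fastforce
    qed
    ultimately show False using assms(5,7) slope_up by simp
  qed
  show ?thesis using sublist3_append_cases[OF assms(1)] no1 no2 by blast
qed

lemma sublist_peak_at_ascent:
  assumes "sublist [x, y, z] (u @ v)" "u \<noteq> []" "v \<noteq> []" "heights_ge 0 v" "last u < hd v"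
    "x < y" "z < y"
  shows "sublist [x, y, z] u \<or> sublist [x, y, z] v"
proof -
  have no1: False if "u = u0 @ [x]" "v = y # z # v0" for u0 v0
    using that assms(4,7) not_heights_ge_0_descent by metis
  have no2: False if "u = u0 @ [x, y]" "v = z # v0" for u0 v0 using that assms(5,7) by simp
  show ?thesis using sublist3_append_cases[OF assms(1)] no1 no2 by blast
qed

lemma sublist_around_other:
  assumes "sublist [x, y, z] (u @ q # v)" "q \<noteq> x" "q \<noteq> y" "q \<noteq> z"
  shows "sublist [x, y, z] u \<or> sublist [x, y, z] v"
proof -
  have A: "sublist [x, y, z] u \<or> sublist [x, y, z] ([q] @ v)" using sublist3_append_cases[OF assms(1)] assms(2-4) by auto
  have nq: "\<not> sublist [x, y, z] [q]" unfolding sublist_def by (auto simp: append_eq_Cons_conv)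
  have "sublist [x, y, z] ([q] @ v) \<Longrightarrow> sublist [x, y, z] v"
    using sublist3_append_cases[of x y z "[q]" v] assms(2-4) nq by auto
  then show ?thesis using A by blast
qed

definition before :: "nat \<Rightarrow> nat list \<Rightarrow> nat list" where
  "before q w = takeWhile (\<lambda>x. x \<noteq> q) w"
definition after :: "nat \<Rightarrow> nat list \<Rightarrow> nat list" where
  "after q w = tl (dropWhile (\<lambda>x. x \<noteq> q) w)"

lemma before_after:
  assumes "q \<in> set w"
  shows "w = before q w @ q # after q w" "q \<notin> set (before q w)"
proof -
  have ne: "dropWhile (\<lambda>x. x \<noteq> q) w \<noteq> []" using assms by (simp add: dropWhile_eq_Nil_conv)
  have h: "hd (dropWhile (\<lambda>x. x \<noteq> q) w) = q" using assms hd_dropWhile[OF ne] by simp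
  have "dropWhile (\<lambda>x. x \<noteq> q) w = q # after q w"
    unfolding after_def using ne h by (cases "dropWhile (\<lambda>x. x \<noteq> q) w") auto
  then show "w = before q w @ q # after q w" unfolding before_def by (metis takeWhile_dropWhile_id)
  show "q \<notin> set (before q w)" unfolding before_def by (metis (mono_tags) set_takeWhileD)
qed

lemma before_after_eq:
  assumes "w = u @ q # v" "q \<notin> set u"
  shows "before q w = u" "after q w = v"
proof -
  have "q \<in> set w" using assms by simp
  then have "u @ q # v = before q w @ q # after q w" "q \<notin> set (before q w)" using before_after assms(1) by auto
  then show "before q w = u" "after q w = v" using split_at_unique assms(2) by metis+
qed

lemma b_factor_sublist: "b_factor n d i j = card {w \<in> ballot_perms n d. sublist [i, n, j] w}"
  unfolding b_factor_def factor_iff_sublist ..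


lemma sublist_middle_not_last:
  assumes "distinct w" "sublist [x, y, z] w"
  shows "last w \<noteq> y"
proof -
  obtain ps ss where w: "w = ps @ [x, y, z] @ ss" using assms(2) unfolding sublist_def by blast
  then have "last w \<in> set (z # ss)" by (simp add: last_in_set)
  moreover have "y \<notin> set (z # ss)" using assms(1) w by auto
  ultimately show ?thesis by blast
qed

lemma sublist_middle_not_hd:
  assumes "distinct w" "sublist [x, y, z] w"
  shows "hd w \<noteq> y"
proof -
  obtain ps ss where w: "w = ps @ [x, y, z] @ ss" using assms(2) unfolding sublist_def by blast
  then have "hd w \<in> set (ps @ [x])" by (cases ps) auto
  moreover have "y \<notin> set (ps @ [x])" using assms(1) w by auto
  ultimately show ?thesis by blast
qed

lemma sublist_middle_unique:
  assumes "distinct w" "sublist [x, y, z] w" "sublist [x', y, z'] w"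
  shows "x = x' \<and> z = z'"
proof -
  obtain ps ss where w: "w = (ps @ [x]) @ y # (z # ss)" using assms(2) unfolding sublist_def by auto
  obtain ps' ss' where w': "w = (ps' @ [x']) @ y # (z' # ss')" using assms(3) unfolding sublist_def by auto
  have "y \<notin> set (ps @ [x])" using assms(1) unfolding w by auto
  moreover have "y \<notin> set (ps' @ [x'])" using assms(1) unfolding w' by auto
  ultimately
  show ?thesis using split_at_unique[OF trans[OF w[symmetric] w']] by simp
qed

section \<open>Deleting \<open>n\<close> from a ballot permutation\<close>

lemma finite_ballot_perms: "finite (ballot_perms n d)"
  by (rule finite_subset[of _ "permutations_of_set {1..n}"]) (auto simp: ballot_perms_def)

lemma snoc_in_permutations_of_set_iff:
  assumes "T = insert n S" "n \<notin> S"
  shows "v @ [n] \<in> permutations_of_set T \<longleftrightarrow> v \<in> permutations_of_set S"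
  using assms unfolding permutations_of_set_def by auto

lemma snoc_max_in_ballot_perms_iff:
  assumes "2 \<le> n"
  shows "v @ [n] \<in> ballot_perms n d \<longleftrightarrow> v \<in> ballot_perms (n - 1) d"
proof -
  have perm: "v @ [n] \<in> permutations_of_set {1..n} \<longleftrightarrow> v \<in> permutations_of_set {1..n-1}"
    using assms by (intro snoc_in_permutations_of_set_iff) auto
  show ?thesis
  proof (cases "v \<in> permutations_of_set {1..n-1}")
    case True
    then have "set v = {1..n-1}" by (simp add: permutations_of_set_def)
    then have v: "v \<noteq> []" using assms by auto
    then have "last v < n" using last_in_set[of v] \<open>set v = {1..n-1}\<close> assms by fastforce
    then show ?thesis using v perm True unfolding ballot_perms_def ballot_iff_heights_ge
      by (simp add: heights_ge_peak_last des_append)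
  qed (use perm in \<open>simp add: ballot_perms_def\<close>)
qed

lemma ballot_perms_ending_max:
  assumes "2 \<le> n"
  shows "{w \<in> ballot_perms n d. last w = n} = (\<lambda>v. v @ [n]) ` ballot_perms (n - 1) d"
proof (intro equalityI subsetI)
  fix w assume w: "w \<in> {w \<in> ballot_perms n d. last w = n}"
  then have "w \<noteq> []" using assms by (auto simp: ballot_perms_def permutations_of_set_def)
  then have "w = butlast w @ [n]" using w append_butlast_last_id[of w] by simp
  then show "w \<in> (\<lambda>v. v @ [n]) ` ballot_perms (n - 1) d"
    using w snoc_max_in_ballot_perms_iff[OF assms, of "butlast w"] by (metis (lifting) image_eqI mem_Collect_eq)
qed (use snoc_max_in_ballot_perms_iff[OF assms] in auto)

text \<open>A ballot permutation cannot start with its maximum, since it would start with a descent.\<close>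

lemma ballot_perms_not_ending_max:
  assumes w: "w \<in> ballot_perms n d" and "last w \<noteq> n" "1 \<le> n"
  shows "\<exists>(i, j) \<in> distinct_pairs (n - 1). sublist [i, n, j] w"
proof -
  have sw: "set w = {1..n}" "distinct w" "ballot w"
    using w unfolding ballot_perms_def permutations_of_set_def by auto
  then obtain a c where wac: "w = a @ n # c" using split_list[of n w] \<open>1 \<le> n\<close> by auto
  have "c \<noteq> []" using \<open>last w \<noteq> n\<close> wac by auto
  then have hc: "hd c \<in> {1..n}" "hd c \<noteq> n" using sw wac by (auto simp: hd_in_set)
  have "a \<noteq> []"
  proof
    assume "a = []"
    then have "w = n # hd c # tl c" using wac \<open>c \<noteq> []\<close> by simp
    moreover have "hd c < n" using hc by auto
    ultimately show False using sw(3) not_heights_ge_0_descent unfolding ballot_iff_heights_ge by metis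
  qed
  then have la: "last a \<in> {1..n}" "last a \<noteq> n" using sw wac by (auto simp: last_in_set)
  have "last a \<noteq> hd c" using sw(2) wac last_in_set[OF \<open>a \<noteq> []\<close>] hd_in_set[OF \<open>c \<noteq> []\<close>] by auto
  moreover have "w = butlast a @ [last a, n, hd c] @ tl c" using wac \<open>a \<noteq> []\<close> \<open>c \<noteq> []\<close> by simp
  ultimately show ?thesis using la hc unfolding sublist_def distinct_pairs_def by fastforce
qed

lemma b_recursion:
  assumes n: "2 \<le> n"
  shows "b n d = b (n - 1) d + (\<Sum>(i, j) \<in> distinct_pairs (n - 1). b_factor n d i j)"
proof -
  define F where "F x = {w \<in> ballot_perms n d. sublist [fst x, n, snd x] w}" for x
  let ?A = "{w \<in> ballot_perms n d. last w = n}"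
  have "ballot_perms n d = ?A \<union> (\<Union>x\<in>distinct_pairs (n - 1). F x)"
    using ballot_perms_not_ending_max n unfolding F_def by fastforce
  moreover have "?A \<inter> F x = {}" for x
    using sublist_middle_not_last unfolding F_def ballot_perms_def permutations_of_set_def by fastforce
  moreover have "F x \<inter> F y = {}" if "x \<noteq> y" for x y
    using that sublist_middle_unique unfolding F_def ballot_perms_def permutations_of_set_def
    by (fastforce simp: prod_eq_iff)
  ultimately have "b n d = card ?A + (\<Sum>x\<in>distinct_pairs (n - 1). card (F x))"
    unfolding b_def by (intro card_Un_UN_disjoint[OF finite_ballot_perms _ finite_distinct_pairs]) auto
  moreover have "card ?A = b (n - 1) d"
    unfolding b_def ballot_perms_ending_max[OF n] by (simp add: card_image inj_on_def)
  ultimately show ?thesis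
    unfolding F_def b_factor_sublist by (simp add: case_prod_beta)
qed

section \<open>Shifting the neighbours of \<open>n\<close> in ballot permutations\<close>

definition factor_perms :: "nat \<Rightarrow> nat \<Rightarrow> nat \<Rightarrow> nat \<Rightarrow> nat list set" where
  "factor_perms n d i j = {w \<in> permutations_of_set {1..n}. des w = d \<and> sublist [i, n, j] w}"

lemma b_factor_factor_perms: "b_factor n d i j = card {w \<in> factor_perms n d i j. ballot w}"
  unfolding b_factor_sublist factor_perms_def ballot_perms_def by (rule arg_cong[where f = card]) auto

locale neighbour_shift =
  fixes n i j d :: nat
  assumes i: "1 \<le> i" "i + 2 \<le> n" and j: "1 \<le> j" "j + 2 \<le> n" and ij: "i \<noteq> j"
begin

definition pivot :: nat where "pivot = n - 1"

abbreviation S where "S \<equiv> factor_perms n d i j"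
abbreviation S' where "S' \<equiv> factor_perms n d (i + 1) (j + 1)"
abbreviation V where "V \<equiv> {1..n} - {pivot}"

lemma pivot_facts: "2 \<le> pivot" "pivot < n" "i < pivot" "j < pivot" "Suc pivot = n"
  using i j ij unfolding pivot_def by auto

lemma finite_S: "finite S"
  by (rule finite_subset[of _ "permutations_of_set {1..n}"]) (auto simp: factor_perms_def)

lemma mem_V_iff: "x \<in> V \<longleftrightarrow> 1 \<le> x \<and> x < pivot \<or> x = n"
  using pivot_facts by auto

definition split_des :: "nat list \<Rightarrow> nat list \<Rightarrow> nat" where
  "split_des u v = des u + des v + (if v = [] then 0 else 1)"

definition valid_split :: "nat list \<Rightarrow> nat list \<Rightarrow> bool" where
  "valid_split u v \<longleftrightarrow> distinct (u @ v) \<and> set u \<union> set v = V \<and> (sublist [i, n, j] u \<or> sublist [i, n, j] v)"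

definition good_split :: "nat list \<Rightarrow> nat list \<Rightarrow> bool" where
  "good_split u v \<longleftrightarrow> valid_split u v \<and> split_des u v = d"

lemma valid_split_sym: "valid_split u v \<Longrightarrow> valid_split v u"
  unfolding valid_split_def by (auto simp: Un_commute)

lemma valid_split_subset: "valid_split u v \<Longrightarrow> set u \<subseteq> V \<and> set v \<subseteq> V"
  unfolding valid_split_def by auto

lemma valid_split_hd_neq_last:
  assumes "valid_split u v" "u \<noteq> []" "v \<noteq> []"
  shows "hd u \<noteq> last v"
proof -
  have "hd u \<in> set u" "last v \<in> set v" using assms(2,3) by simp_all
  moreover have "set u \<inter> set v = {}" using assms(1) unfolding valid_split_def by simp
  ultimately show ?thesis by (metis disjoint_iff)
qed

lemma valid_split_factor:
  assumes "valid_split u v"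
  shows "n \<in> set u \<Longrightarrow> sublist [i, n, j] u" "n \<in> set v \<Longrightarrow> sublist [i, n, j] v"
  using assms set_mono_sublist[of "[i, n, j]"] unfolding valid_split_def by fastforce+

lemma valid_split_pivot_peak:
  assumes "valid_split u v"
  shows "u \<noteq> [] \<Longrightarrow> last u < pivot" "v \<noteq> [] \<Longrightarrow> hd v < pivot"
proof -
  have dist: "distinct u" "distinct v" using assms unfolding valid_split_def by auto
  have below: "x < pivot" if "x \<in> set u \<union> set v" "x \<noteq> n" for x
    using that valid_split_subset[OF assms] mem_V_iff by blast
  show "last u < pivot" if "u \<noteq> []"
    using below[of "last u"] last_in_set[OF that] valid_split_factor(1)[OF assms]
      sublist_middle_not_last[OF dist(1)] by auto
  show "hd v < pivot" if "v \<noteq> []"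
    using below[of "hd v"] hd_in_set[OF that] valid_split_factor(2)[OF assms]
      sublist_middle_not_hd[OF dist(2)] by auto
qed

lemma valid_split_des: "valid_split u v \<Longrightarrow> des (u @ pivot # v) = split_des u v"
  unfolding split_des_def by (rule des_peak) (auto dest: valid_split_pivot_peak)

lemma append_pivot_in_S_iff:
  assumes "pivot \<notin> set u" "pivot \<notin> set v"
  shows "u @ pivot # v \<in> S \<longleftrightarrow> good_split u v"
proof
  assume "u @ pivot # v \<in> S"
  then have s: "set (u @ pivot # v) = {1..n}" and dist: "distinct (u @ pivot # v)"
    and des: "des (u @ pivot # v) = d" and fac: "sublist [i, n, j] (u @ pivot # v)"
    unfolding factor_perms_def permutations_of_set_def by auto
  have "sublist [i, n, j] u \<or> sublist [i, n, j] v"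
    using sublist_around_other[OF fac] pivot_facts by auto
  then have "valid_split u v" unfolding valid_split_def using s dist assms by auto
  then show "good_split u v" using des valid_split_des unfolding good_split_def by simp
next
  assume "good_split u v"
  then have "valid_split u v" and des: "split_des u v = d" unfolding good_split_def by auto
  then show "u @ pivot # v \<in> S"
    using assms pivot_facts valid_split_des
    unfolding valid_split_def factor_perms_def permutations_of_set_def
    by (auto simp: sublist_append sublist_Cons_right)
qed

definition lpart :: "nat list \<Rightarrow> nat list" where "lpart w = before pivot w"
definition rpart :: "nat list \<Rightarrow> nat list" where "rpart w = after pivot w"

lemma parts_append_pivot:
  assumes "pivot \<notin> set u"
  shows "lpart (u @ pivot # v) = u" "rpart (u @ pivot # v) = v"
  unfolding lpart_def rpart_def using before_after_eq assms by auto

lemma S_decomp: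
  assumes "w \<in> S"
  shows "w = lpart w @ pivot # rpart w" "good_split (lpart w) (rpart w)"
proof -
  have "set w = {1..n}" "distinct w" using assms unfolding factor_perms_def permutations_of_set_def by auto
  then have "w = lpart w @ pivot # rpart w" "pivot \<notin> set (lpart w)" "pivot \<notin> set (rpart w)"
    using before_after[of pivot w] pivot_facts unfolding lpart_def rpart_def
    by (auto, metis distinct.simps(2) distinct_append)
  then show "w = lpart w @ pivot # rpart w" "good_split (lpart w) (rpart w)"
    using append_pivot_in_S_iff assms by metis+
qed

lemma good_split_pivot_notin: "good_split u v \<Longrightarrow> pivot \<notin> set u \<and> pivot \<notin> set v"
  unfolding good_split_def using valid_split_subset by blast

lemma good_split_nonempty: "good_split u v \<Longrightarrow> u \<noteq> [] \<or> v \<noteq> []"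
  unfolding good_split_def valid_split_def by auto

lemma ballot_iff_parts:
  assumes "w \<in> S"
  shows "ballot w \<longleftrightarrow> (if lpart w = [] then False else if rpart w = [] then heights_ge 0 (lpart w)
           else heights_ge 0 (lpart w) \<and> heights_ge (- height (lpart w)) (rpart w))"
proof -
  have w: "w = lpart w @ pivot # rpart w" and good: "good_split (lpart w) (rpart w)"
    using S_decomp[OF assms] by auto
  then have peak: "lpart w \<noteq> [] \<Longrightarrow> last (lpart w) < pivot" "rpart w \<noteq> [] \<Longrightarrow> hd (rpart w) < pivot"
    using valid_split_pivot_peak unfolding good_split_def by blast+
  show ?thesis
    using w good_split_nonempty[OF good] peak not_heights_ge_peak_first[of "rpart w" pivot]
      heights_ge_peak_last[of "lpart w" pivot] heights_ge_peak[of "lpart w" "rpart w" pivot]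
    unfolding ballot_iff_heights_ge by (metis append_Nil)
qed

definition up :: "nat \<Rightarrow> nat" where "up x = (if x = n then n else x + 1)"
definition down :: "nat \<Rightarrow> nat" where "down x = (if x = n then n else x - 1)"

lemma up_less_iff: "a \<in> V \<Longrightarrow> c \<in> V \<Longrightarrow> up a < up c \<longleftrightarrow> a < c"
  using pivot_facts unfolding up_def by auto

lemma down_less_iff: "a \<in> {2..n} \<Longrightarrow> c \<in> {2..n} \<Longrightarrow> down a < down c \<longleftrightarrow> a < c"
  using pivot_facts unfolding down_def by auto

lemma down_up: "x \<in> V \<Longrightarrow> down (up x) = x"
  unfolding up_def down_def pivot_def by auto

lemma up_down: "x \<in> {2..n} \<Longrightarrow> up (down x) = x"
  using pivot_facts unfolding up_def down_def by auto

lemma up_image: "up ` V = {2..n}"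
proof (intro equalityI subsetI)
  fix y assume "y \<in> {2..n}"
  moreover have "down y \<in> V" using \<open>y \<in> {2..n}\<close> pivot_facts unfolding down_def by auto
  ultimately show "y \<in> up ` V" using up_down by (intro rev_image_eqI[of "down y"]) auto
qed (use pivot_facts in \<open>auto simp: up_def\<close>)

lemma down_image: "down ` {2..n} = V"
proof (intro equalityI subsetI)
  fix x assume "x \<in> V"
  then show "x \<in> down ` {2..n}" using up_image down_up by (intro rev_image_eqI[of "up x"]) auto
qed (use pivot_facts in \<open>auto simp: down_def\<close>)

lemma inj_on_up: "inj_on up V"
  by (rule inj_on_inverseI[where g = down]) (rule down_up)

lemma inj_on_down: "inj_on down {2..n}"
  by (rule inj_on_inverseI[where g = up]) (rule up_down)

lemma map_up_stats:
  assumes "set w \<subseteq> V"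
  shows "des (map up w) = des w" "height (map up w) = height w"
    "heights_ge c (map up w) \<longleftrightarrow> heights_ge c w"
proof -
  have "up a < up b \<longleftrightarrow> a < b" if "a \<in> set w" "b \<in> set w" for a b
    using that assms up_less_iff by blast
  then show "des (map up w) = des w" "height (map up w) = height w"
    "heights_ge c (map up w) \<longleftrightarrow> heights_ge c w"
    using height_des_map heights_ge_map by blast+
qed

lemma map_down_des:
  assumes "set w \<subseteq> {2..n}"
  shows "des (map down w) = des w"
  using assms down_less_iff height_des_map(2)[of w down] by blast

text \<open>Since \<open>n - 1\<close> is a peak and \<open>1\<close> a valley, \<open>u (n - 1) v \<mapsto> v' 1 u'\<close> (where \<open>'\<close> raises
  every value except \<open>n\<close> by one) preserves the number of descents.\<close>

lemma good_split_transfer_in_S':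
  assumes "good_split u v"
  shows "map up v @ 1 # map up u \<in> S'"
proof -
  have dist: "distinct (v @ u)" and sets: "set (v @ u) = V" and des: "split_des u v = d"
    and fac: "sublist [i, n, j] u \<or> sublist [i, n, j] v"
    using assms unfolding good_split_def valid_split_def by auto
  have up_sets: "set (map up v) \<subseteq> {2..n}" "set (map up u) \<subseteq> {2..n}"
    using sets up_image by auto
  have "set (map up v @ 1 # map up u) = up ` V \<union> {1}" using sets by auto
  also have "\<dots> = {1..n}" using up_image pivot_facts by auto
  finally have "set (map up v @ 1 # map up u) = {1..n}" .
  moreover have "distinct (map up (v @ u))"
    unfolding distinct_map using dist sets inj_on_up by simp
  then have "distinct (map up v @ 1 # map up u)" using up_sets by auto
  moreover have "des (map up v @ 1 # map up u) = d"
  proof -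
    have "des (map up v @ 1 # map up u) = des (map up v) + des (map up u) + (if map up v = [] then 0 else 1)"
      using up_sets last_in_set[of "map up v"] hd_in_set[of "map up u"] by (intro des_valley) auto
    moreover have "set u \<subseteq> V" "set v \<subseteq> V" using sets by auto
    ultimately show ?thesis using des map_up_stats(1) unfolding split_des_def by auto
  qed
  moreover have "sublist [i + 1, n, j + 1] (map up v @ 1 # map up u)"
  proof -
    have "map up [i, n, j] = [i + 1, n, j + 1]" using pivot_facts unfolding up_def by auto
    then show ?thesis using fac map_mono_sublist[of "[i, n, j]" _ up]
      by (auto simp: sublist_append sublist_Cons_right)
  qed
  ultimately show ?thesis unfolding factor_perms_def permutations_of_set_def by simp
qed

lemma S'_decomp:
  assumes "w' \<in> S'"
  obtains u v where "good_split u v" "w' = map up v @ 1 # map up u"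
proof -
  have s: "set w' = {1..n}" and dist: "distinct w'" and des: "des w' = d"
    and fac: "sublist [i + 1, n, j + 1] w'"
    using assms unfolding factor_perms_def permutations_of_set_def by auto
  define c where "c = before 1 w'"
  define e where "e = after 1 w'"
  have "1 \<in> set w'" using s pivot_facts by simp
  then have w': "w' = c @ 1 # e" and "1 \<notin> set c" using before_after[of 1 w'] unfolding c_def e_def by auto
  then have "set (e @ c) = set w' - {1}" "distinct (e @ c)" using dist by auto
  moreover have "{1..n} - {1} = {2..n}" by (auto simp: le_Suc_eq)
  ultimately have sets: "set (e @ c) = {2..n}" and dist_ec: "distinct (e @ c)" using s by simp_all
  define u where "u = map down e"
  define v where "v = map down c"
  have sub: "set c \<subseteq> {2..n}" "set e \<subseteq> {2..n}" using sets by auto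
  have "map (up \<circ> down) c = c" by (rule map_idI) (use sub up_down in auto)
  moreover have "map (up \<circ> down) e = e" by (rule map_idI) (use sub up_down in auto)
  ultimately have inverse: "map up v = c" "map up u = e" unfolding u_def v_def by simp_all
  have "set (u @ v) = down ` set (e @ c)" unfolding u_def v_def by auto
  then have "set (u @ v) = V" using sets down_image by simp
  moreover have "distinct (u @ v)"
  proof -
    have "distinct (map down (e @ c))" unfolding distinct_map using dist_ec sets inj_on_down by simp
    then show ?thesis unfolding u_def v_def by simp
  qed
  moreover have "sublist [i, n, j] u \<or> sublist [i, n, j] v"
  proof -
    have "sublist [i + 1, n, j + 1] c \<or> sublist [i + 1, n, j + 1] e"
      using sublist_around_other[of "i + 1" n "j + 1" c 1 e] fac w' i(1) j(1) pivot_facts by auto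
    then have "sublist (map down [i + 1, n, j + 1]) v \<or> sublist (map down [i + 1, n, j + 1]) u"
      unfolding u_def v_def
      using map_mono_sublist[of "[i + 1, n, j + 1]" c down] map_mono_sublist[of "[i + 1, n, j + 1]" e down]
      by blast
    moreover have "map down [i + 1, n, j + 1] = [i, n, j]" using pivot_facts unfolding down_def by auto
    ultimately show ?thesis by auto
  qed
  moreover have "split_des u v = d"
  proof -
    have "1 < last c" if "c \<noteq> []" using sub last_in_set[OF that] by fastforce
    moreover have "1 < hd e" if "e \<noteq> []" using sub hd_in_set[OF that] by fastforce
    ultimately have "des w' = des c + des e + (if c = [] then 0 else 1)"
      unfolding w' by (rule des_valley)
    then show ?thesis using des map_down_des sub unfolding split_des_def u_def v_def by auto
  qed
  ultimately have "good_split u v" unfolding good_split_def valid_split_def by simp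
  then show ?thesis using that w' inverse by blast
qed

definition transfer :: "nat list \<Rightarrow> nat list" where
  "transfer w = map up (rpart w) @ 1 # map up (lpart w)"

lemma transfer_append_pivot:
  "good_split u v \<Longrightarrow> transfer (u @ pivot # v) = map up v @ 1 # map up u"
  unfolding transfer_def using parts_append_pivot good_split_pivot_notin by simp

lemma transfer_in_S': "w \<in> S \<Longrightarrow> transfer w \<in> S'"
  unfolding transfer_def using S_decomp(2) good_split_transfer_in_S' by blast

lemma transfer_image: "transfer ` S = S'"
proof (intro equalityI subsetI)
  fix w' assume "w' \<in> S'"
  then obtain u v where good: "good_split u v" and w': "w' = map up v @ 1 # map up u"
    by (rule S'_decomp)
  have "u @ pivot # v \<in> S" using good good_split_pivot_notin append_pivot_in_S_iff by blast
  moreover have "w' = transfer (u @ pivot # v)" using transfer_append_pivot[OF good] w' by simp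
  ultimately show "w' \<in> transfer ` S" by (rule rev_image_eqI)
qed (use transfer_in_S' in blast)

lemma inj_on_transfer: "inj_on transfer S"
proof (rule inj_onI)
  fix w1 w2 assume w: "w1 \<in> S" "w2 \<in> S" and eq: "transfer w1 = transfer w2"
  have parts: "set (lpart w) \<union> set (rpart w) \<subseteq> V" if "w \<in> S" for w
    using S_decomp(2)[OF that] valid_split_subset unfolding good_split_def by blast
  have split: "before 1 (transfer w) = map up (rpart w)" "after 1 (transfer w) = map up (lpart w)"
    if "w \<in> S" for w
  proof -
    have "set (map up (rpart w)) \<subseteq> {2..n}" using parts[OF that] up_image by auto
    then have "1 \<notin> set (map up (rpart w))" by auto
    then show "before 1 (transfer w) = map up (rpart w)" "after 1 (transfer w) = map up (lpart w)"
      unfolding transfer_def using before_after_eq[OF refl] by auto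
  qed
  have "map up (rpart w1) = map up (rpart w2)" "map up (lpart w1) = map up (lpart w2)"
    using eq split[OF w(1)] split[OF w(2)] by simp_all
  moreover have "set (rpart w1) \<union> set (rpart w2) \<subseteq> V" "set (lpart w1) \<union> set (lpart w2) \<subseteq> V"
    using parts[OF w(1)] parts[OF w(2)] by auto
  then have "inj_on up (set (rpart w1) \<union> set (rpart w2))" "inj_on up (set (lpart w1) \<union> set (lpart w2))"
    using inj_on_subset[OF inj_on_up] by blast+
  ultimately have "rpart w1 = rpart w2" "lpart w1 = lpart w2" using inj_on_map_eq_map by blast+
  then show "w1 = w2" using S_decomp(1) w by metis
qed

lemma card_ballot_S': "card {w \<in> S'. ballot w} = card {w \<in> S. ballot (transfer w)}"
proof -
  have "{w \<in> S'. ballot w} = transfer ` {w \<in> S. ballot (transfer w)}"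
    using transfer_image by auto
  then show ?thesis using inj_on_subset[OF inj_on_transfer] by (simp add: card_image)
qed

lemma ballot_transfer_iff_parts:
  assumes "w \<in> S"
  shows "ballot (transfer w) \<longleftrightarrow> (if lpart w = [] then heights_ge 0 (rpart w) \<and> 1 \<le> height (rpart w)
           else if rpart w = [] then heights_ge (-1) (lpart w)
           else heights_ge 0 (rpart w) \<and> 1 \<le> height (rpart w) \<and> heights_ge (- height (rpart w)) (lpart w))"
proof -
  let ?u = "map up (lpart w)" and ?v = "map up (rpart w)"
  have good: "good_split (lpart w) (rpart w)" using S_decomp[OF assms] by auto
  then have sets: "set (lpart w) \<subseteq> V" "set (rpart w) \<subseteq> V"
    using valid_split_subset unfolding good_split_def by blast+
  then have "set ?u \<subseteq> {2..n}" "set ?v \<subseteq> {2..n}" using up_image by auto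
  then have valley: "?u \<noteq> [] \<Longrightarrow> 1 < hd ?u" "?v \<noteq> [] \<Longrightarrow> 1 < last ?v"
    using hd_in_set[of ?u] last_in_set[of ?v] by fastforce+
  note stats = map_up_stats[OF sets(1)] map_up_stats[OF sets(2)]
  consider "lpart w = []" | "lpart w \<noteq> []" "rpart w = []" | "lpart w \<noteq> []" "rpart w \<noteq> []" by blast
  then show ?thesis
  proof cases
    case 1
    then have "rpart w \<noteq> []" using good_split_nonempty[OF good] by simp
    then show ?thesis using 1 valley heights_ge_valley_last[of ?v 1] stats
      unfolding transfer_def ballot_iff_heights_ge by simp
  next
    case 2
    then show ?thesis using valley heights_ge_valley_first[of ?u 1] stats
      unfolding transfer_def ballot_iff_heights_ge by simp
  next
    case 3
    then show ?thesis using valley heights_ge_valley[of ?u ?v 1] stats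
      unfolding transfer_def ballot_iff_heights_ge by simp
  qed
qed

text \<open>The ballot conditions for \<open>w\<close> and for \<open>transfer w\<close> only involve the two parts of \<open>w\<close>.
  Counting separately the words with both parts nonempty (where exchanging the parts is a
  bijection), with empty right part and with empty left part, the two numbers of ballot words
  differ by \<open>level_splits\<close> on one side and by \<open>dipping\<close> and \<open>rising\<close> on the other.\<close>

definition S_both where "S_both = {w \<in> S. lpart w \<noteq> [] \<and> rpart w \<noteq> []}"
definition S_no_right where "S_no_right = {w \<in> S. lpart w \<noteq> [] \<and> rpart w = []}"
definition S_no_left where "S_no_left = {w \<in> S. lpart w = []}"

lemma card_S_split:
  "card {w \<in> S. R w} = card {w \<in> S_both. R w} + card {w \<in> S_no_right. R w} + card {w \<in> S_no_left. R w}"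
proof -
  have "{w \<in> S. R w} = ({w \<in> S_both. R w} \<union> {w \<in> S_no_right. R w}) \<union> {w \<in> S_no_left. R w}"
    unfolding S_both_def S_no_right_def S_no_left_def by auto
  moreover have "finite {w \<in> S_both. R w}" "finite {w \<in> S_no_right. R w}" "finite {w \<in> S_no_left. R w}"
    unfolding S_both_def S_no_right_def S_no_left_def using finite_S by auto
  ultimately show ?thesis unfolding S_both_def S_no_right_def S_no_left_def
    by (simp add: card_Un_disjoint disjoint_iff)
qed

definition swap_parts :: "nat list \<Rightarrow> nat list" where
  "swap_parts w = rpart w @ pivot # lpart w"

lemma swap_parts_both:
  assumes "w \<in> S_both"
  shows "swap_parts w \<in> S_both" "lpart (swap_parts w) = rpart w" "rpart (swap_parts w) = lpart w"
    "swap_parts (swap_parts w) = w"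
proof -
  have w: "w \<in> S" "lpart w \<noteq> []" "rpart w \<noteq> []" using assms unfolding S_both_def by auto
  have good: "good_split (lpart w) (rpart w)" using S_decomp(2)[OF w(1)] .
  then have "good_split (rpart w) (lpart w)"
    using valid_split_sym w(2,3) unfolding good_split_def split_des_def by auto
  then have "swap_parts w \<in> S"
    unfolding swap_parts_def using append_pivot_in_S_iff good_split_pivot_notin by blast
  moreover show "lpart (swap_parts w) = rpart w" "rpart (swap_parts w) = lpart w"
    unfolding swap_parts_def using parts_append_pivot good_split_pivot_notin[OF good] by auto
  ultimately show "swap_parts w \<in> S_both" using w unfolding S_both_def by simp
  show "swap_parts (swap_parts w) = w"
    using S_decomp(1)[OF w(1)] \<open>lpart (swap_parts w) = rpart w\<close> \<open>rpart (swap_parts w) = lpart w\<close>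
    unfolding swap_parts_def[of "swap_parts w"] by simp
qed

lemma card_swap_parts: "card {w \<in> S_both. R (swap_parts w)} = card {w \<in> S_both. R w}"
proof -
  have "bij_betw swap_parts {w \<in> S_both. R (swap_parts w)} {w \<in> S_both. R w}"
    by (rule bij_betw_byWitness[where f' = swap_parts]) (auto simp: swap_parts_both)
  then show ?thesis by (rule bij_betw_same_card)
qed

definition level_splits where
  "level_splits = {w \<in> S_both. heights_ge 0 (rpart w) \<and> height (rpart w) = 0 \<and> heights_ge 0 (lpart w)}"

definition dipping where
  "dipping = {w \<in> S_no_right. heights_ge (-1) (lpart w) \<and> \<not> heights_ge 0 (lpart w)}"

definition rising where
  "rising = {w \<in> S_no_left. heights_ge 0 (rpart w) \<and> 1 \<le> height (rpart w)}"

abbreviation transfer_ballot_both where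
  "transfer_ballot_both \<equiv>
     {w \<in> S_both. heights_ge 0 (rpart w) \<and> 1 \<le> height (rpart w) \<and> heights_ge (- height (rpart w)) (lpart w)}"

lemma ballot_transfer_both: "{w \<in> S_both. ballot (transfer w)} = transfer_ballot_both"
  using ballot_transfer_iff_parts unfolding S_both_def by auto

lemma card_ballot_both: "card {w \<in> S_both. ballot w} = card transfer_ballot_both + card level_splits"
proof -
  have "{w \<in> S_both. ballot (swap_parts w)}
      = {w \<in> S_both. heights_ge 0 (rpart w) \<and> heights_ge (- height (rpart w)) (lpart w)}"
    using ballot_iff_parts swap_parts_both unfolding S_both_def by auto
  also have "\<dots> = transfer_ballot_both \<union> level_splits"
  proof (rule set_eqI)
    fix w
    have "heights_ge 0 (rpart w) \<Longrightarrow> 0 \<le> height (rpart w)" using heights_ge_height by fastforce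
    then show "w \<in> {w \<in> S_both. heights_ge 0 (rpart w) \<and> heights_ge (- height (rpart w)) (lpart w)}
        \<longleftrightarrow> w \<in> transfer_ballot_both \<union> level_splits"
      unfolding level_splits_def by (cases "height (rpart w) = 0") auto
  qed
  finally have "card {w \<in> S_both. ballot w} = card (transfer_ballot_both \<union> level_splits)"
    using card_swap_parts[of ballot] by simp
  also have "\<dots> = card transfer_ballot_both + card level_splits"
    using finite_S unfolding level_splits_def S_both_def by (intro card_Un_disjoint) auto
  finally show ?thesis .
qed

lemma card_ballot_transfer_no_right:
  "card {w \<in> S_no_right. ballot (transfer w)} = card {w \<in> S_no_right. ballot w} + card dipping"
proof -
  have "{w \<in> S_no_right. ballot (transfer w)} = {w \<in> S_no_right. ballot w} \<union> dipping"
    using ballot_iff_parts ballot_transfer_iff_parts heights_ge_mono[of 0 _ "-1"]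
    unfolding dipping_def S_no_right_def by auto
  moreover have "{w \<in> S_no_right. ballot w} \<inter> dipping = {}"
    using ballot_iff_parts unfolding dipping_def S_no_right_def by auto
  ultimately show ?thesis
    using finite_S unfolding dipping_def S_no_right_def by (simp add: card_Un_disjoint)
qed

lemma ballot_no_left: "{w \<in> S_no_left. ballot w} = {}"
  using ballot_iff_parts unfolding S_no_left_def by auto

lemma ballot_transfer_no_left: "{w \<in> S_no_left. ballot (transfer w)} = rising"
  using ballot_transfer_iff_parts unfolding rising_def S_no_left_def by auto

text \<open>A word of \<open>level_splits\<close> is turned into one of \<open>dipping\<close> or \<open>rising\<close> by concatenating
  its right and left parts and putting \<open>n - 1\<close> at the end that keeps the number of descents.
  The inverse cuts the concatenation at the end of its longest ballot prefix (for \<open>dipping\<close>) or at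
  its last return to height zero (for \<open>rising\<close>).\<close>

definition merge_parts :: "nat list \<Rightarrow> nat list" where
  "merge_parts w = (if hd (lpart w) < last (rpart w) then (rpart w @ lpart w) @ [pivot]
     else pivot # (rpart w @ lpart w))"

lemma good_split_concat:
  assumes "good_split u v" "u \<noteq> []" "v \<noteq> []"
  shows "hd u < last v \<Longrightarrow> good_split (v @ u) []" "\<not> hd u < last v \<Longrightarrow> good_split [] (v @ u)"
proof -
  have d: "distinct (u @ v)" and s: "set u \<union> set v = V"
    and f: "sublist [i, n, j] u \<or> sublist [i, n, j] v"
    using assms(1) unfolding good_split_def valid_split_def by blast+
  have "distinct (v @ u)" using d by auto
  moreover have "set (v @ u) = V" using s by (simp add: Un_commute)
  moreover have "sublist [i, n, j] (v @ u)" using f by (auto simp: sublist_append)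
  ultimately have valid: "valid_split (v @ u) []" "valid_split [] (v @ u)"
    unfolding valid_split_def by simp_all
  have des: "des (v @ u) = des v + (if hd u < last v then 1 else 0) + des u"
    using des_append[OF assms(3,2)] .
  show "good_split (v @ u) []" if "hd u < last v"
    using valid des that assms(1,3) unfolding good_split_def split_des_def by simp
  show "good_split [] (v @ u)" if "\<not> hd u < last v"
    using valid des that assms(1,3) unfolding good_split_def split_des_def by simp
qed

lemma good_split_of_concat:
  assumes "valid_split (v @ u) []" "sublist [i, n, j] u \<or> sublist [i, n, j] v" "split_des u v = d"
  shows "good_split u v"
  using assms unfolding good_split_def valid_split_def by (auto simp: Un_commute)

lemma level_splits_append_pivot:
  assumes "good_split u v" "u \<noteq> []" "v \<noteq> []" "heights_ge 0 v" "height v = 0" "heights_ge 0 u"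
  shows "u @ pivot # v \<in> level_splits"
  using assms append_pivot_in_S_iff good_split_pivot_notin parts_append_pivot
  unfolding level_splits_def S_both_def by simp

lemma merge_parts_append_pivot:
  "good_split u v \<Longrightarrow> merge_parts (u @ pivot # v)
     = (if hd u < last v then (v @ u) @ [pivot] else pivot # (v @ u))"
  unfolding merge_parts_def using parts_append_pivot good_split_pivot_notin by simp

lemma level_splitsD:
  assumes "w \<in> level_splits"
  shows "w = lpart w @ pivot # rpart w" "good_split (lpart w) (rpart w)" "lpart w \<noteq> []" "rpart w \<noteq> []"
    "heights_ge 0 (rpart w)" "height (rpart w) = 0" "heights_ge 0 (lpart w)"
  using assms S_decomp unfolding level_splits_def S_both_def by auto

lemma merge_parts_in: "w \<in> level_splits \<Longrightarrow> merge_parts w \<in> dipping \<union> rising"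
proof -
  assume w: "w \<in> level_splits"
  let ?u = "lpart w" and ?v = "rpart w"
  note F = level_splitsD[OF w]
  have merge: "merge_parts w = (if hd ?u < last ?v then (?v @ ?u) @ [pivot] else pivot # (?v @ ?u))"
    using merge_parts_append_pivot[OF F(2)] F(1) by metis
  have notin: "pivot \<notin> set (?v @ ?u)" using good_split_pivot_notin[OF F(2)] by simp
  show ?thesis
  proof (cases "hd ?u < last ?v")
    case True
    have "merge_parts w \<in> S" "lpart (merge_parts w) = ?v @ ?u" "rpart (merge_parts w) = []"
      using merge True good_split_concat(1)[OF F(2-4) True] append_pivot_in_S_iff[of "?v @ ?u" "[]"]
        parts_append_pivot[of "?v @ ?u" "[]"] notin by auto
    moreover have "heights_ge (-1) (?v @ ?u)" "\<not> heights_ge 0 (?v @ ?u)"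
      using heights_ge_append[OF F(4,3)] slope_down[OF True] F(5-7) heights_ge_mono[OF F(5), of "-1"]
        heights_ge_nonpos[of 1 ?u] by auto
    ultimately show ?thesis using F(4) unfolding dipping_def S_no_right_def by simp
  next
    case False
    moreover have "hd ?u \<noteq> last ?v"
      using valid_split_hd_neq_last F(2-4) unfolding good_split_def by blast
    ultimately have lt: "last ?v < hd ?u" by simp
    have "merge_parts w \<in> S" "lpart (merge_parts w) = []" "rpart (merge_parts w) = ?v @ ?u"
      using merge False good_split_concat(2)[OF F(2-4) False] append_pivot_in_S_iff[of "[]" "?v @ ?u"]
        parts_append_pivot[of "[]" "?v @ ?u"] notin by auto
    moreover have "heights_ge 0 (?v @ ?u)" "1 \<le> height (?v @ ?u)"
      using heights_ge_append[OF F(4,3)] height_append[OF F(4,3)] slope_up[OF lt] F(5-7)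
        heights_ge_mono[OF F(7), of "-1"] heights_ge_height[OF F(7)] by auto
    ultimately show ?thesis unfolding rising_def S_no_left_def by simp
  qed
qed

lemma inj_on_merge_parts: "inj_on merge_parts level_splits"
proof (rule inj_onI)
  fix w1 w2 assume w: "w1 \<in> level_splits" "w2 \<in> level_splits" and eq: "merge_parts w1 = merge_parts w2"
  note F1 = level_splitsD[OF w(1)] and F2 = level_splitsD[OF w(2)]
  have parts: "lpart (merge_parts w) = (if hd (lpart w) < last (rpart w) then rpart w @ lpart w else [])"
    "rpart (merge_parts w) = (if hd (lpart w) < last (rpart w) then [] else rpart w @ lpart w)"
    if "w \<in> level_splits" for w
    using parts_append_pivot[of "rpart w @ lpart w" "[]"] parts_append_pivot[of "[]" "rpart w @ lpart w"]
      good_split_pivot_notin[OF level_splitsD(2)[OF that]] unfolding merge_parts_def by auto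
  have case_eq: "hd (lpart w1) < last (rpart w1) \<longleftrightarrow> hd (lpart w2) < last (rpart w2)"
    and concat: "rpart w1 @ lpart w1 = rpart w2 @ lpart w2"
    using parts[OF w(1)] parts[OF w(2)] eq F1(4) F2(4) by (auto split: if_splits)
  have neq: "hd (lpart w) \<noteq> last (rpart w)" if "w \<in> level_splits" for w
    using valid_split_hd_neq_last level_splitsD(2-4)[OF that] unfolding good_split_def by blast
  consider (descent) "hd (lpart w1) < last (rpart w1)" | (ascent) "last (rpart w1) < hd (lpart w1)"
    using neq[OF w(1)] linorder_neqE_nat by blast
  then have "rpart w1 = rpart w2"
  proof cases
    case descent
    then have "hd (lpart w2) < last (rpart w2)" using case_eq by simp
    with descent show ?thesis
      by (intro split_at_first_negative_unique[OF concat F1(4-6) _ F2(4-6)] slope_down)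
  next
    case ascent
    then have "last (rpart w2) < hd (lpart w2)" using case_eq neq[OF w(2)] by auto
    with ascent show ?thesis
      by (intro split_at_last_zero_unique[OF concat F1(4,6) _ F1(7) F2(4,6) _ F2(7)] slope_up)
  qed
  then show "w1 = w2" using concat F1(1) F2(1) by simp
qed

lemma dipping_subset: "dipping \<subseteq> merge_parts ` level_splits"
proof
  fix w' assume "w' \<in> dipping"
  then have w': "w' \<in> S" "rpart w' = []" "heights_ge (-1) (lpart w')" "\<not> heights_ge 0 (lpart w')"
    unfolding dipping_def S_no_right_def by auto
  obtain v u where c: "lpart w' = v @ u" and uv: "v \<noteq> []" "u \<noteq> []" "heights_ge 0 v" "height v = 0"
    "slope (last v) (hd u) = -1" "heights_ge 0 u"
    using split_at_first_negative[OF w'(3,4)] by blast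
  have lt: "hd u < last v" using slope_eq_minus_1D[OF uv(5)] .
  have good': "good_split (v @ u) []" using S_decomp(2)[OF w'(1)] c w'(2) by simp
  then have "sublist [i, n, j] (v @ u)" unfolding good_split_def valid_split_def by simp
  then have "sublist [i, n, j] u \<or> sublist [i, n, j] v"
    using sublist_peak_at_descent[OF _ uv(1,2,3,4) lt, of i n j] pivot_facts by auto
  moreover have "split_des u v = d"
    using good' des_append[OF uv(1,2)] lt uv(1) unfolding good_split_def split_des_def by simp
  ultimately have good: "good_split u v"
    using good' good_split_of_concat unfolding good_split_def by blast
  have "w' = merge_parts (u @ pivot # v)"
    using merge_parts_append_pivot[OF good] lt S_decomp(1)[OF w'(1)] c w'(2) by simp
  with level_splits_append_pivot[OF good uv(2,1,3,4,6)] show "w' \<in> merge_parts ` level_splits"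
    by (rule rev_image_eqI)
qed

lemma rising_subset: "rising \<subseteq> merge_parts ` level_splits"
proof
  fix w' assume "w' \<in> rising"
  then have w': "w' \<in> S" "lpart w' = []" "heights_ge 0 (rpart w')" "1 \<le> height (rpart w')"
    unfolding rising_def S_no_left_def by auto
  obtain v u where c: "rpart w' = v @ u" and uv: "v \<noteq> []" "u \<noteq> []" "heights_ge 0 v" "height v = 0"
    "slope (last v) (hd u) = 1" "heights_ge 0 u"
    using split_at_last_zero[OF w'(3,4)] by blast
  have lt: "last v < hd u" using slope_eq_1D[OF uv(5)] .
  have good': "good_split [] (v @ u)" using S_decomp(2)[OF w'(1)] c w'(2) by simp
  then have "sublist [i, n, j] (v @ u)" unfolding good_split_def valid_split_def by simp
  then have "sublist [i, n, j] u \<or> sublist [i, n, j] v"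
    using sublist_peak_at_ascent[OF _ uv(1,2,6) lt, of i n j] pivot_facts by auto
  moreover have "split_des u v = d"
    using good' des_append[OF uv(1,2)] lt uv(1) unfolding good_split_def split_des_def by simp
  ultimately have good: "good_split u v"
    using good' good_split_of_concat valid_split_sym unfolding good_split_def by blast
  have "w' = merge_parts (u @ pivot # v)"
    using merge_parts_append_pivot[OF good] lt S_decomp(1)[OF w'(1)] c w'(2) by simp
  with level_splits_append_pivot[OF good uv(2,1,3,4,6)] show "w' \<in> merge_parts ` level_splits"
    by (rule rev_image_eqI)
qed

lemma card_level_splits: "card level_splits = card dipping + card rising"
proof -
  have "merge_parts ` level_splits = dipping \<union> rising"
    using merge_parts_in dipping_subset rising_subset by blast
  then have "card level_splits = card (dipping \<union> rising)"
    using card_image[OF inj_on_merge_parts] by simp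
  also have "\<dots> = card dipping + card rising"
    using finite_S unfolding dipping_def rising_def S_no_right_def S_no_left_def
    by (intro card_Un_disjoint) auto
  finally show ?thesis .
qed

lemma b_factor_shift: "b_factor n d i j = b_factor n d (i + 1) (j + 1)"
proof -
  have "card {w \<in> S'. ballot w}
      = card {w \<in> S_both. ballot (transfer w)} + card {w \<in> S_no_right. ballot (transfer w)}
        + card {w \<in> S_no_left. ballot (transfer w)}"
    unfolding card_ballot_S' by (rule card_S_split)
  also have "\<dots> = card {w \<in> S_both. ballot w} + card {w \<in> S_no_right. ballot w} + card {w \<in> S_no_left. ballot w}"
    unfolding ballot_no_left
    using ballot_transfer_both card_ballot_transfer_no_right ballot_transfer_no_left
      card_ballot_both card_level_splits by simp
  also have "\<dots> = card {w \<in> S. ballot w}" by (rule card_S_split[symmetric])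
  finally show ?thesis using b_factor_factor_perms by metis
qed

end

section \<open>Comparing the two recursions\<close>

lemma b_factor_shift_by:
  assumes "1 \<le> a" "1 \<le> c" "a + t \<le> n - 1" "c + t \<le> n - 1" "a \<noteq> c"
  shows "b_factor n d (a + t) (c + t) = b_factor n d a c"
  using assms
proof (induction t)
  case (Suc t)
  interpret neighbour_shift n "a + t" "c + t" d
    using Suc.prems by unfold_locales auto
  show ?case using b_factor_shift Suc by simp
qed simp

lemma p_factor_shift_by:
  assumes "1 \<le> a" "1 \<le> c" "a + t \<le> n - 1" "c + t \<le> n - 1"
  shows "p_factor n d (a + t) (c + t) = p_factor n d a c"
  using assms
proof (induction t)
  case (Suc t)
  then have "p_factor n d (a + Suc t) (c + Suc t) = p_factor n d (a + t) (c + t)"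
    using p_factor_shift[of n "a + Suc t" "c + Suc t" d] by simp
  then show ?case using Suc by simp
qed simp

lemma pair_sums_eq:
  assumes H: "\<And>n d j. 3 \<le> n \<Longrightarrow> 2 \<le> j \<Longrightarrow> j \<le> n - 1 \<Longrightarrow>
                b_factor n d 1 j + b_factor n d j 1 = 2 * p_factor n d 1 j"
    and ij: "(i, j) \<in> distinct_pairs (n - 1)"
  shows "b_factor n d i j + b_factor n d j i = p_factor n d i j + p_factor n d j i"
proof -
  have main: "b_factor n d i j + b_factor n d j i = p_factor n d i j + p_factor n d j i"
    if "1 \<le> i" "i < j" "j \<le> n - 1" for i j
  proof -
    define k where "k = j - i + 1"
    have ij: "i = 1 + (i - 1)" "j = k + (i - 1)" and k: "2 \<le> k" "k \<le> n - 1"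
      using that unfolding k_def by auto
    have "b_factor n d i j = b_factor n d 1 k" "b_factor n d j i = b_factor n d k 1"
      "p_factor n d i j = p_factor n d 1 k"
      using b_factor_shift_by[of 1 k "i - 1" n d] b_factor_shift_by[of k 1 "i - 1" n d]
        p_factor_shift_by[of 1 k "i - 1" n d] that k ij by auto
    then show ?thesis using H[of n k d] k p_factor_swap[of n d j i] by simp
  qed
  show ?thesis
    using ij main[of i j] main[of j i] unfolding distinct_pairs_def by (cases "i < j") auto
qed

lemma sum_b_factor_eq_sum_p_factor:
  assumes "\<And>n d j. 3 \<le> n \<Longrightarrow> 2 \<le> j \<Longrightarrow> j \<le> n - 1 \<Longrightarrow>
             b_factor n d 1 j + b_factor n d j 1 = 2 * p_factor n d 1 j"
  shows "(\<Sum>(i, j) \<in> distinct_pairs (n - 1). b_factor n d i j)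
       = (\<Sum>(i, j) \<in> distinct_pairs (n - 1). p_factor n d i j)"
proof -
  let ?P = "distinct_pairs (n - 1)"
  have "2 * (\<Sum>(i, j) \<in> ?P. b_factor n d i j) = (\<Sum>(i, j) \<in> ?P. b_factor n d i j + b_factor n d j i)"
    using sum_distinct_pairs_swap[of "\<lambda>i j. b_factor n d j i" "n - 1"]
    by (simp add: sum.distrib case_prod_beta)
  also have "\<dots> = (\<Sum>(i, j) \<in> ?P. p_factor n d i j + p_factor n d j i)"
    using pair_sums_eq[OF assms] by (intro sum.cong) auto
  also have "\<dots> = 2 * (\<Sum>(i, j) \<in> ?P. p_factor n d i j)"
    using sum_distinct_pairs_swap[of "\<lambda>i j. p_factor n d j i" "n - 1"]
    by (simp add: sum.distrib case_prod_beta)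
  finally show ?thesis by simp
qed

lemma ballot_perms_1: "ballot_perms 1 d = (if d = 0 then {[1]} else {})"
proof -
  have "permutations_of_set {1::nat} = {[1]}"
    by (simp add: permutations_of_set_singleton)
  then show ?thesis unfolding ballot_perms_def ballot_iff_heights_ge by auto
qed

lemma odd_perms_1: "odd_perms 1 d = (if d = 0 then {id} else {})"
proof -
  have "cycles 1 id = {{1}}" unfolding cycles_def cycle_of_def by auto
  then have "odd_order 1 id" "cyclic_weight 1 id = 0"
    unfolding odd_order_def cyclic_weight_def cdes_def by simp_all
  moreover have "{\<sigma>. \<sigma> permutes {1::nat..1}} = {id}" by simp
  ultimately show ?thesis unfolding odd_perms_def by auto
qed

theorem theorem3p4:
  assumes "\<And>n d j. 3 \<le> n \<Longrightarrow> 2 \<le> j \<Longrightarrow> j \<le> n - 1 \<Longrightarrow>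
             b_factor n d 1 j + b_factor n d j 1 = 2 * p_factor n d 1 j"
  shows "\<And>n d. 1 \<le> n \<Longrightarrow> d \<le> (n - 1) div 2 \<Longrightarrow> b n d = p n d"
proof -
  fix n d :: nat
  assume "1 \<le> n"
  then show "b n d = p n d"
  proof (induction n arbitrary: d rule: nat_induct_at_least)
    case base
    show ?case unfolding b_def p_def ballot_perms_1 odd_perms_1 by simp
  next
    case (Suc n)
    then show ?case
      using b_recursion[of "Suc n" d] p_recursion[of "Suc n" d] sum_b_factor_eq_sum_p_factor[OF assms, of "Suc n" d]
      by simp
  qed
qed

end
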